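(* Let $q\in\mathbb C$ with $|q|>1$, let $t\ge 2$ and let $\zeta\in\mathbb C$ be a primitive $t$-th root of unity. For $g\in\mathbb C(z)$ put $\sigma_q(g)(z)=g(qz)$ and $\sigma_\zeta(g)(z)=g(\zeta z)$. Let $a\in\mathbb C(z)$, $a\neq 0$, be written as $$a=\lambda\, z^T\prod_{k=0}^{t-1}\prod_{d=-N-1}^{N}\prod_{i=1}^{R}\bigl(z-\zeta^k q^d r_i\bigr)^{s_{k,d,i}},$$ where $\lambda,r_1,\dots,r_R\in\mathbb C^*$, $T,N,s_{k,d,i}\in\mathbb Z$, and the $r_i$ are pairwise distinct modulo the subgroup $\zeta^{\mathbb Z}q^{\mathbb Z}$ of $\mathbb C^*$. Put $a_{i,k}=\sum_{d=-N-1}^{N}s_{k,d,i}$, $d_{k,i}=\sum_{j=0}^{t-1}\zeta^{kj}a_{i,j}$, and let $D$ be the $t\times R$ matrix whose entry in row $k$ ($k=0,\dots,t-1$) and column $i$ ($i=1,\dots,R$) is $d_{k,i}$; the row with $k=0$ is called the first row. For integers $n_0,\dots,n_{t-1}$ write $\varphi(x)=x^{n_0}(\sigma_\zeta x)^{n_1}\cdots(\sigma_\zeta^{t-1}x)^{n_{t-1}}$. Then: (1) If $T=0$ and either $\lambda^{\mathbb Z}\cap q^{\mathbb Z}\neq\{1\}$ or $\lambda$ is a root of unity, then there exist $0\neq b\in\mathbb C(z)$ and integers $n_0,\dots,n_{t-1}$, not all zero, with $\varphi(a)=\sigma_q(b)/b$ if and only if $D$ has a zero row. (2) If either $T\neq0$,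 or ($\lambda^{\mathbb Z}\cap q^{\mathbb Z}=\{1\}$ and $\lambda$ is not a root of unity), then there exist $0\neq b\in\mathbb C(z)$ and integers $n_0,\dots,n_{t-1}$, not all zero, with $\varphi(a)=\sigma_q(b)/b$ if and only if $D$ has a zero row other than the first row.
   Context: Here $\varphi(a)$ means $a^{n_0}\sigma_\zeta(a)^{n_1}\cdots\sigma_\zeta^{t-1}(a)^{n_{t-1}}\in\mathbb C(z)$. *)

theory Defs
  imports "HOL-Computational_Algebra.Computational_Algebra"
begin

text \<open>Rational functions C(z) are modelled as the fraction field of complex polynomials.
  The variable z is the polynomial [:0,1:].\<close>

type_synonym ratfun = "complex poly fract"

definition zvar :: ratfun where
  "zvar = to_fract [:0, 1:]"

definition const_rf :: "complex \<Rightarrow> ratfun" where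
  "const_rf c = to_fract [:c:]"

text \<open>The substitution operator g(z) \<mapsto> g(c z), computed on some representative
  g = p/r with r \<noteq> 0 (independent of the representative when c \<noteq> 0).\<close>
definition subst_scale :: "complex \<Rightarrow> ratfun \<Rightarrow> ratfun" where
  "subst_scale c g = (case (SOME (p, r). r \<noteq> 0 \<and> g = Fract p r) of (p, r) \<Rightarrow>
      Fract (pcompose p [:0, c:]) (pcompose r [:0, c:]))"

definition phi :: "complex \<Rightarrow> nat \<Rightarrow> (nat \<Rightarrow> int) \<Rightarrow> ratfun \<Rightarrow> ratfun" where
  "phi \<zeta> t n x = (\<Prod>j<t. ((subst_scale \<zeta> ^^ j) x) powi (n j))"

definition primitive_root_of_unity :: "nat \<Rightarrow> complex \<Rightarrow> bool" where
  "primitive_root_of_unity t \<zeta> \<longleftrightarrow> 0 < t \<and> \<zeta> ^ t = 1 \<and> (\<forall>m. 0 < m \<and> m < t \<longrightarrow> \<zeta> ^ m \<noteq> 1)"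

definition root_of_unity :: "complex \<Rightarrow> bool" where
  "root_of_unity x \<longleftrightarrow> (\<exists>n::nat. 0 < n \<and> x ^ n = 1)"

definition nontriv_meet :: "complex \<Rightarrow> complex \<Rightarrow> bool" where
  "nontriv_meet lam q \<longleftrightarrow> (\<exists>m n :: int. lam powi m = q powi n \<and> lam powi m \<noteq> 1)"

definition a_rf :: "complex \<Rightarrow> complex \<Rightarrow> nat \<Rightarrow> complex \<Rightarrow> int \<Rightarrow> int \<Rightarrow> nat
    \<Rightarrow> (nat \<Rightarrow> complex) \<Rightarrow> (nat \<Rightarrow> int \<Rightarrow> nat \<Rightarrow> int) \<Rightarrow> ratfun" where
  "a_rf q \<zeta> t lam T N R r s = const_rf lam * zvar powi T *
     (\<Prod>k<t. \<Prod>d\<in>{-N-1..N}. \<Prod>i\<in>{1..R}.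
        (zvar - const_rf (\<zeta> ^ k * q powi d * r i)) powi (s k d i))"

definition aik :: "int \<Rightarrow> (nat \<Rightarrow> int \<Rightarrow> nat \<Rightarrow> int) \<Rightarrow> nat \<Rightarrow> nat \<Rightarrow> int" where
  "aik N s i k = (\<Sum>d\<in>{-N-1..N}. s k d i)"

definition Dmat :: "complex \<Rightarrow> nat \<Rightarrow> int \<Rightarrow> (nat \<Rightarrow> int \<Rightarrow> nat \<Rightarrow> int) \<Rightarrow> nat \<Rightarrow> nat \<Rightarrow> complex" where
  "Dmat \<zeta> t N s k i = (\<Sum>j<t. \<zeta> ^ (k * j) * of_int (aik N s i j))"

definition has_solution :: "complex \<Rightarrow> complex \<Rightarrow> nat \<Rightarrow> ratfun \<Rightarrow> bool" where
  "has_solution q \<zeta> t a \<longleftrightarrow> (\<exists>b n. b \<noteq> 0 \<and> (\<exists>j<t. n j \<noteq> 0) \<and>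
      phi \<zeta> t n a = subst_scale q b / b)"

end

(*
  A rational function h is a quotient \<sigma>_q(b)/b exactly when its zeros and poles cancel, with
  multiplicity, along every orbit \<gamma> q^\<int> and its leading coefficient is a power of q: the zeros
  and poles along one orbit pair off into factors (z - \<gamma>)/(z - q^d \<gamma>), each of which is such
  a quotient.

  For h = \<phi>(a) the orbit of 0 contributes T (n_0 + ... + n_{t-1}) and, the r_i being distinct
  modulo \<zeta>^\<int> q^\<int>, the orbit of \<zeta>^l r_i contributes the cyclic correlation
  \<Sum>_j n_j a_{i,l+j}. By Fourier inversion over the t-th roots of unity these all vanish iff
  n^(m) d_{m,i} = 0 for all m and i, where n^(m) = \<Sum>_j n_j \<zeta>^(-mj). A nonzero n has some
  n^(m) \<noteq> 0, so a solution forces a zero row m of D; and m = 0 needs n^(0) = \<Sum>_j n_j \<noteq> 0,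
  which the leading coefficient \<lambda>^(\<Sum>_j n_j) \<zeta>^(...) of \<phi>(a) permits only in case (1).
  Conversely, row 0 is realized by n = (1, ..., 1), and a zero row k \<noteq> 0 by the coefficients,
  read backwards, of a rational polynomial vanishing at 1 and at every t-th root of unity that
  is not a Galois conjugate of \<zeta>^k: the rows of D at the conjugates of \<zeta>^k vanish too.
*)

theory Submission
  imports Defs
begin

lemma mult_hom_power_int:
  fixes f :: "'a::field \<Rightarrow> 'b::field"
  assumes one: "f 1 = 1"
    and mult: "\<And>x y. x \<noteq> 0 \<Longrightarrow> y \<noteq> 0 \<Longrightarrow> f (x * y) = f x * f y"
    and inv: "\<And>x. x \<noteq> 0 \<Longrightarrow> f (inverse x) = inverse (f x)"
    and "x \<noteq> 0"
  shows "f (x powi n) = f x powi n"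
proof -
  have pow: "y \<noteq> 0 \<Longrightarrow> f (y ^ k) = f y ^ k" for y k
    by (induct k) (auto simp: one mult)
  show ?thesis
    unfolding power_int_def using \<open>x \<noteq> 0\<close> by (auto simp: pow inv)
qed

lemma mult_hom_prod:
  fixes f :: "'a::field \<Rightarrow> 'b::field"
  assumes "f 1 = 1" and "\<And>x y. x \<noteq> 0 \<Longrightarrow> y \<noteq> 0 \<Longrightarrow> f (x * y) = f x * f y"
    and "\<And>x. x \<in> A \<Longrightarrow> g x \<noteq> 0"
  shows "f (\<Prod>x\<in>A. g x) = (\<Prod>x\<in>A. f (g x))"
  using assms(3) by (induct A rule: infinite_finite_induct) (auto simp: assms(1,2))

lemma add_hom_power_int:
  fixes f :: "'a::field \<Rightarrow> int"
  assumes mult: "\<And>x y. x \<noteq> 0 \<Longrightarrow> y \<noteq> 0 \<Longrightarrow> f (x * y) = f x + f y"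
    and inv: "\<And>x. x \<noteq> 0 \<Longrightarrow> f (inverse x) = - f x"
    and "x \<noteq> 0"
  shows "f (x powi n) = n * f x"
proof -
  have one: "f 1 = 0" using mult[of 1 1] by simp
  have pow: "y \<noteq> 0 \<Longrightarrow> f (y ^ k) = int k * f y" for y k
    by (induct k) (auto simp: one mult algebra_simps)
  show ?thesis
    unfolding power_int_def using \<open>x \<noteq> 0\<close> by (auto simp: pow inv)
qed

lemma add_hom_prod:
  fixes f :: "'a::field \<Rightarrow> int"
  assumes mult: "\<And>x y. x \<noteq> 0 \<Longrightarrow> y \<noteq> 0 \<Longrightarrow> f (x * y) = f x + f y"
    and "\<And>x. x \<in> A \<Longrightarrow> g x \<noteq> 0"
  shows "f (\<Prod>x\<in>A. g x) = (\<Sum>x\<in>A. f (g x))"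
proof -
  have "f 1 = 0" using mult[of 1 1] by simp
  with assms(2) show ?thesis
    by (induct A rule: infinite_finite_induct) (auto simp: mult)
qed

lemma prod_power_int_distrib:
  fixes f :: "'a \<Rightarrow> 'b::field"
  shows "(\<Prod>x\<in>A. f x) powi n = (\<Prod>x\<in>A. f x powi n)"
  by (induct A rule: infinite_finite_induct) (simp_all add: power_int_mult_distrib)

lemma prod_power_int_sum:
  fixes x :: "'a::field"
  assumes "x \<noteq> 0"
  shows "(\<Prod>j\<in>A. x powi f j) = x powi (\<Sum>j\<in>A. f j)"
  by (induct A rule: infinite_finite_induct) (simp_all add: power_int_add assms)

definition fract_rep :: "ratfun \<Rightarrow> complex poly \<times> complex poly" where
  "fract_rep g = (SOME (p, r). r \<noteq> 0 \<and> g = Fract p r)"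

lemma fract_repD:
  assumes "fract_rep g = (p, r)"
  shows "r \<noteq> 0" "g = Fract p r"
proof -
  obtain p' r' where "g = Fract p' r'" "r' \<noteq> 0" by (cases g) auto
  then have "\<exists>x. case x of (p, r) \<Rightarrow> r \<noteq> 0 \<and> g = Fract p r" by auto
  from someI_ex[OF this] assms show "r \<noteq> 0" "g = Fract p r"
    unfolding fract_rep_def by auto
qed

lemma fract_rep_Fract:
  assumes "r \<noteq> 0"
  obtains p' r' where "fract_rep (Fract p r) = (p', r')" "r' \<noteq> 0" "p * r' = p' * r"
proof -
  obtain p' r' where rep: "fract_rep (Fract p r) = (p', r')" by fastforce
  with fract_repD[OF rep] assms that show ?thesis by (simp add: eq_fract)
qed

lemma pcompose_scale_eq_0_iff: "(c::complex) \<noteq> 0 \<Longrightarrow> p \<circ>\<^sub>p [:0, c:] = 0 \<longleftrightarrow> p = 0"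
  by (simp add: pcompose_eq_0_iff)

lemma subst_scale_Fract:
  assumes c: "c \<noteq> 0" and r: "r \<noteq> 0"
  shows "subst_scale c (Fract p r) = Fract (p \<circ>\<^sub>p [:0, c:]) (r \<circ>\<^sub>p [:0, c:])"
proof -
  obtain p' r' where rep: "fract_rep (Fract p r) = (p', r')" "r' \<noteq> 0" "p * r' = p' * r"
    using fract_rep_Fract[OF r] .
  have "subst_scale c (Fract p r) = Fract (p' \<circ>\<^sub>p [:0, c:]) (r' \<circ>\<^sub>p [:0, c:])"
    using rep(1) unfolding subst_scale_def fract_rep_def[symmetric] by simp
  also have "\<dots> = Fract (p \<circ>\<^sub>p [:0, c:]) (r \<circ>\<^sub>p [:0, c:])"
    using c r rep(2,3)
    by (simp add: eq_fract pcompose_scale_eq_0_iff pcompose_mult[symmetric])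
  finally show ?thesis .
qed

lemma subst_scale_to_fract: "c \<noteq> 0 \<Longrightarrow> subst_scale c (to_fract p) = to_fract (p \<circ>\<^sub>p [:0, c:])"
  by (simp add: to_fract_def subst_scale_Fract pcompose_1)

lemma subst_scale_mult: "c \<noteq> 0 \<Longrightarrow> subst_scale c (g * h) = subst_scale c g * subst_scale c h"
  by (cases g, cases h) (simp add: subst_scale_Fract pcompose_scale_eq_0_iff pcompose_mult)

lemma subst_scale_1: "c \<noteq> 0 \<Longrightarrow> subst_scale c 1 = 1"
  using subst_scale_to_fract[of c 1] by (simp add: pcompose_1)

lemma subst_scale_eq_0_iff: "c \<noteq> 0 \<Longrightarrow> subst_scale c g = 0 \<longleftrightarrow> g = 0"
  by (cases g) (simp add: subst_scale_Fract pcompose_scale_eq_0_iff Zero_fract_def eq_fract)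

lemma subst_scale_inverse:
  "c \<noteq> 0 \<Longrightarrow> subst_scale c (inverse g) = inverse (subst_scale c g)"
proof (cases g)
  case (Fract a b)
  assume "c \<noteq> 0"
  then show ?thesis
    using Fract subst_scale_eq_0_iff[of c 0]
    by (cases "a = 0") (auto simp: subst_scale_Fract fract_collapse)
qed

lemma subst_scale_funpow_eq_0_iff: "c \<noteq> 0 \<Longrightarrow> (subst_scale c ^^ j) g = 0 \<longleftrightarrow> g = 0"
  by (induct j) (auto simp: subst_scale_eq_0_iff)

section \<open>Zeros and poles along a set, leading coefficient and degree\<close>

definition root_count :: "complex set \<Rightarrow> complex poly \<Rightarrow> int" where
  "root_count S p = (\<Sum>\<gamma>\<in>{\<gamma>\<in>S. poly p \<gamma> = 0}. int (order \<gamma> p))"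

lemma root_count_superset:
  assumes "p \<noteq> 0" "finite F" "{\<gamma>. poly p \<gamma> = 0} \<subseteq> F"
  shows "root_count S p = (\<Sum>\<gamma>\<in>F \<inter> S. int (order \<gamma> p))"
  unfolding root_count_def
  by (rule sum.mono_neutral_left) (use assms in \<open>auto simp: order_0I\<close>)

lemma root_count_mult:
  assumes "p \<noteq> 0" "r \<noteq> 0"
  shows "root_count S (p * r) = root_count S p + root_count S r"
proof -
  define F where "F = {\<gamma>. poly (p * r) \<gamma> = 0}"
  have pr: "p * r \<noteq> 0" using assms by simp
  have F: "finite F" unfolding F_def using poly_roots_finite[OF pr] .
  have "root_count S (p * r) = (\<Sum>\<gamma>\<in>F \<inter> S. int (order \<gamma> (p * r)))"
    by (rule root_count_superset[OF pr F]) (auto simp: F_def)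
  also have "\<dots> = (\<Sum>\<gamma>\<in>F \<inter> S. int (order \<gamma> p)) + (\<Sum>\<gamma>\<in>F \<inter> S. int (order \<gamma> r))"
    by (simp add: order_mult[OF pr] sum.distrib)
  also have "(\<Sum>\<gamma>\<in>F \<inter> S. int (order \<gamma> p)) = root_count S p"
    by (rule root_count_superset[symmetric, OF assms(1) F]) (auto simp: F_def)
  also have "(\<Sum>\<gamma>\<in>F \<inter> S. int (order \<gamma> r)) = root_count S r"
    by (rule root_count_superset[symmetric, OF assms(2) F]) (auto simp: F_def)
  finally show ?thesis .
qed

lemma root_count_const: "c \<noteq> 0 \<Longrightarrow> root_count S [:c:] = 0"
  by (simp add: root_count_def)

lemma root_count_1: "root_count S 1 = 0"
  using root_count_const[of 1 S] by (simp add: one_pCons)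

lemma root_count_linear: "root_count S [:-\<beta>, 1:] = (if \<beta> \<in> S then 1 else 0)"
proof -
  have "{\<gamma>\<in>S. poly [:-\<beta>, 1:] \<gamma> = 0} = (if \<beta> \<in> S then {\<beta>} else {})" by auto
  then show ?thesis
    using order_power_n_n[of \<beta> 1] by (simp add: root_count_def)
qed

lemma root_count_pos:
  assumes "p \<noteq> 0" "poly p \<gamma> = 0" "\<gamma> \<in> S"
  shows "root_count S p > 0"
proof -
  have "finite {\<gamma>\<in>S. poly p \<gamma> = 0}"
    using poly_roots_finite[OF assms(1)] by (rule finite_subset[rotated]) auto
  then have "int (order \<gamma> p) \<le> root_count S p"
    unfolding root_count_def
    by (rule member_le_sum[of \<gamma> _ "\<lambda>x. int (order x p)", rotated 2]) (use assms in auto)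
  moreover have "order \<gamma> p > 0" using assms by (simp add: order_gt_0_iff)
  ultimately show ?thesis by linarith
qed

lemma root_count_nonzero_imp_root:
  assumes "root_count S p \<noteq> 0"
  shows "\<exists>\<gamma>\<in>S. poly p \<gamma> = 0"
proof (rule ccontr)
  assume "\<not> (\<exists>\<gamma>\<in>S. poly p \<gamma> = 0)"
  then have "{\<gamma>\<in>S. poly p \<gamma> = 0} = {}" by auto
  with assms show False unfolding root_count_def by simp
qed

lemma pcompose_power_left: "(p ^ n) \<circ>\<^sub>p q = (p \<circ>\<^sub>p q) ^ n"
  by (induct n) (simp_all add: pcompose_mult pcompose_1)

lemma order_pcompose_scale:
  assumes c: "(c::complex) \<noteq> 0" and p: "p \<noteq> 0"
  shows "order \<gamma> (p \<circ>\<^sub>p [:0, c:]) = order (c * \<gamma>) p"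
proof -
  define m where "m = order (c * \<gamma>) p"
  obtain r where r: "p = [:-(c * \<gamma>), 1:] ^ m * r" "\<not> [:-(c * \<gamma>), 1:] dvd r"
    using order_decomp[OF p] unfolding m_def by blast
  have "r \<noteq> 0" "poly r (c * \<gamma>) \<noteq> 0"
    using r(2) by (auto simp: poly_eq_0_iff_dvd)
  have linear: "[:-(c * \<gamma>), 1:] \<circ>\<^sub>p [:0, c:] = smult c [:-\<gamma>, 1:]"
    by (simp add: pcompose_pCons algebra_simps)
  have "p \<circ>\<^sub>p [:0, c:] = smult (c ^ m) ([:-\<gamma>, 1:] ^ m * (r \<circ>\<^sub>p [:0, c:]))"
    by (subst r(1)) (simp only: pcompose_mult pcompose_power_left linear smult_power mult_smult_left)
  moreover have "order \<gamma> (r \<circ>\<^sub>p [:0, c:]) = 0"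
    using \<open>poly r (c * \<gamma>) \<noteq> 0\<close> by (intro order_0I) (simp add: poly_pcompose mult.commute)
  ultimately show ?thesis
    using c \<open>r \<noteq> 0\<close>
    by (simp add: order_smult order_mult pcompose_scale_eq_0_iff order_power_n_n m_def)
qed

lemma root_count_pcompose_scale:
  assumes c: "(c::complex) \<noteq> 0" and p: "p \<noteq> 0"
  shows "root_count S (p \<circ>\<^sub>p [:0, c:]) = root_count ((*) c ` S) p"
proof -
  have "root_count S (p \<circ>\<^sub>p [:0, c:]) =
      (\<Sum>\<gamma>\<in>{\<gamma>\<in>S. poly p (c * \<gamma>) = 0}. int (order (c * \<gamma>) p))"
    unfolding root_count_def by (simp add: order_pcompose_scale[OF c p] poly_pcompose mult.commute)
  also have "\<dots> = (\<Sum>\<delta>\<in>(*) c ` {\<gamma>\<in>S. poly p (c * \<gamma>) = 0}. int (order \<delta> p))"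
    by (rule sum.reindex[symmetric, unfolded comp_def]) (use c in \<open>auto simp: inj_on_def\<close>)
  also have "(*) c ` {\<gamma>\<in>S. poly p (c * \<gamma>) = 0} = {\<delta>\<in>(*) c ` S. poly p \<delta> = 0}"
    by auto
  finally show ?thesis unfolding root_count_def .
qed

text \<open>The three functions below are read off an arbitrary representative \<open>p / r\<close>;
  the lemmas on \<open>Fract\<close> show that they do not depend on its choice.\<close>

definition fract_val :: "complex set \<Rightarrow> ratfun \<Rightarrow> int" where
  "fract_val S g = (case fract_rep g of (p, r) \<Rightarrow> root_count S p - root_count S r)"

definition fract_lead_coeff :: "ratfun \<Rightarrow> complex" where
  "fract_lead_coeff g = (case fract_rep g of (p, r) \<Rightarrow> lead_coeff p / lead_coeff r)"

definition fract_degree :: "ratfun \<Rightarrow> int" where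
  "fract_degree g = (case fract_rep g of (p, r) \<Rightarrow> int (degree p) - int (degree r))"

lemma fract_val_Fract:
  assumes "p \<noteq> 0" "r \<noteq> 0"
  shows "fract_val S (Fract p r) = root_count S p - root_count S r"
proof -
  obtain p' r' where rep: "fract_rep (Fract p r) = (p', r')" "r' \<noteq> 0" "p * r' = p' * r"
    using fract_rep_Fract[OF assms(2)] .
  then have "p' \<noteq> 0" using assms by auto
  have "root_count S p + root_count S r' = root_count S p' + root_count S r"
    using arg_cong[OF rep(3), of "root_count S"] assms rep(2) \<open>p' \<noteq> 0\<close>
    by (simp add: root_count_mult)
  then show ?thesis unfolding fract_val_def rep(1) by simp
qed

lemma fract_lead_coeff_Fract:
  assumes "p \<noteq> 0" "r \<noteq> 0"
  shows "fract_lead_coeff (Fract p r) = lead_coeff p / lead_coeff r"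
proof -
  obtain p' r' where rep: "fract_rep (Fract p r) = (p', r')" "r' \<noteq> 0" "p * r' = p' * r"
    using fract_rep_Fract[OF assms(2)] .
  have "lead_coeff p * lead_coeff r' = lead_coeff p' * lead_coeff r"
    using arg_cong[OF rep(3), of lead_coeff] by (simp add: lead_coeff_mult)
  then show ?thesis unfolding fract_lead_coeff_def rep(1) using assms rep(2) by (simp add: field_simps)
qed

lemma fract_degree_Fract:
  assumes "p \<noteq> 0" "r \<noteq> 0"
  shows "fract_degree (Fract p r) = int (degree p) - int (degree r)"
proof -
  obtain p' r' where rep: "fract_rep (Fract p r) = (p', r')" "r' \<noteq> 0" "p * r' = p' * r"
    using fract_rep_Fract[OF assms(2)] .
  then have "p' \<noteq> 0" using assms by auto
  have "degree p + degree r' = degree p' + degree r"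
    using arg_cong[OF rep(3), of degree] assms rep(2) \<open>p' \<noteq> 0\<close> by (simp add: degree_mult_eq)
  then show ?thesis unfolding fract_degree_def rep(1) by simp
qed

lemma fract_nonzero_cases:
  assumes "g \<noteq> (0::ratfun)"
  obtains p r where "g = Fract p r" "p \<noteq> 0" "r \<noteq> 0"
  using assms by (cases g rule: Fract_cases_nonzero) auto

lemma fract_val_mult: "g \<noteq> 0 \<Longrightarrow> h \<noteq> 0 \<Longrightarrow> fract_val S (g * h) = fract_val S g + fract_val S h"
  by (elim fract_nonzero_cases) (simp add: fract_val_Fract root_count_mult)

lemma fract_val_inverse: "g \<noteq> 0 \<Longrightarrow> fract_val S (inverse g) = - fract_val S g"
  by (elim fract_nonzero_cases) (simp add: fract_val_Fract)

lemma fract_val_divide: "g \<noteq> 0 \<Longrightarrow> h \<noteq> 0 \<Longrightarrow> fract_val S (g / h) = fract_val S g - fract_val S h"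
  by (simp add: divide_inverse fract_val_mult fract_val_inverse)

lemma fract_val_power_int: "g \<noteq> 0 \<Longrightarrow> fract_val S (g powi n) = n * fract_val S g"
  by (rule add_hom_power_int) (auto simp: fract_val_mult fract_val_inverse)

lemma fract_val_prod:
  "(\<And>x. x \<in> A \<Longrightarrow> f x \<noteq> 0) \<Longrightarrow> fract_val S (\<Prod>x\<in>A. f x) = (\<Sum>x\<in>A. fract_val S (f x))"
  by (rule add_hom_prod) (auto simp: fract_val_mult)

lemma fract_lead_coeff_nonzero: "g \<noteq> 0 \<Longrightarrow> fract_lead_coeff g \<noteq> 0"
  by (elim fract_nonzero_cases) (simp add: fract_lead_coeff_Fract)

lemma fract_lead_coeff_mult:
  "g \<noteq> 0 \<Longrightarrow> h \<noteq> 0 \<Longrightarrow> fract_lead_coeff (g * h) = fract_lead_coeff g * fract_lead_coeff h"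
  by (elim fract_nonzero_cases) (simp add: fract_lead_coeff_Fract lead_coeff_mult)

lemma fract_lead_coeff_inverse: "g \<noteq> 0 \<Longrightarrow> fract_lead_coeff (inverse g) = inverse (fract_lead_coeff g)"
  by (elim fract_nonzero_cases) (simp add: fract_lead_coeff_Fract)

lemma fract_lead_coeff_1: "fract_lead_coeff 1 = 1"
  using fract_lead_coeff_Fract[of 1 1] by (simp add: One_fract_def)

lemma fract_lead_coeff_divide:
  "g \<noteq> 0 \<Longrightarrow> h \<noteq> 0 \<Longrightarrow> fract_lead_coeff (g / h) = fract_lead_coeff g / fract_lead_coeff h"
  by (simp add: divide_inverse fract_lead_coeff_mult fract_lead_coeff_inverse)

lemma fract_lead_coeff_power_int:
  "g \<noteq> 0 \<Longrightarrow> fract_lead_coeff (g powi n) = fract_lead_coeff g powi n"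
  by (rule mult_hom_power_int) (auto simp: fract_lead_coeff_mult fract_lead_coeff_inverse fract_lead_coeff_1)

lemma fract_lead_coeff_prod:
  "(\<And>x. x \<in> A \<Longrightarrow> f x \<noteq> 0) \<Longrightarrow> fract_lead_coeff (\<Prod>x\<in>A. f x) = (\<Prod>x\<in>A. fract_lead_coeff (f x))"
  by (rule mult_hom_prod) (auto simp: fract_lead_coeff_mult fract_lead_coeff_1)

lemma fract_val_to_fract: "p \<noteq> 0 \<Longrightarrow> fract_val S (to_fract p) = root_count S p"
  by (simp add: to_fract_def fract_val_Fract root_count_1)

lemma fract_lead_coeff_to_fract: "p \<noteq> 0 \<Longrightarrow> fract_lead_coeff (to_fract p) = lead_coeff p"
  by (simp add: to_fract_def fract_lead_coeff_Fract)

lemma fract_val_subst_scale: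
  "c \<noteq> 0 \<Longrightarrow> g \<noteq> 0 \<Longrightarrow> fract_val S (subst_scale c g) = fract_val ((*) c ` S) g"
  by (elim fract_nonzero_cases)
    (simp add: subst_scale_Fract fract_val_Fract pcompose_scale_eq_0_iff root_count_pcompose_scale)

lemma fract_degree_subst_scale: "c \<noteq> 0 \<Longrightarrow> g \<noteq> 0 \<Longrightarrow> fract_degree (subst_scale c g) = fract_degree g"
  by (elim fract_nonzero_cases)
    (simp add: subst_scale_Fract fract_degree_Fract pcompose_scale_eq_0_iff degree_pcompose)

lemma fract_lead_coeff_subst_scale:
  assumes "c \<noteq> 0" "g \<noteq> 0"
  shows "fract_lead_coeff (subst_scale c g) = c powi fract_degree g * fract_lead_coeff g"
  using assms(2)
proof (elim fract_nonzero_cases)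
  fix p r assume "g = Fract p r" "p \<noteq> 0" "r \<noteq> 0"
  with assms(1) show ?thesis
    by (simp add: subst_scale_Fract fract_lead_coeff_Fract fract_degree_Fract pcompose_scale_eq_0_iff
        lead_coeff_comp power_int_diff field_simps)
qed

lemma zvar_nonzero: "zvar \<noteq> 0"
  by (simp add: zvar_def)

lemma const_rf_eq_0_iff: "const_rf c = 0 \<longleftrightarrow> c = 0"
  by (simp add: const_rf_def)

lemma const_rf_mult: "const_rf (a * b) = const_rf a * const_rf b"
  by (simp add: const_rf_def flip: to_fract_mult)

lemma const_rf_power_int: "const_rf (a powi n) = const_rf a powi n"
proof (cases "a = 0")
  case True
  then show ?thesis by (simp add: power_int_0_left_if const_rf_def flip: one_pCons)
next
  case False
  have inverse: "const_rf (inverse b) = inverse (const_rf b)" if "b \<noteq> 0" for b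
    using that by (simp add: const_rf_def to_fract_def eq_fract flip: one_pCons)
  have "const_rf 1 = 1"
    by (simp add: const_rf_def flip: one_pCons)
  then show ?thesis
    by (rule mult_hom_power_int[OF _ _ _ False]) (auto simp: const_rf_mult inverse)
qed

lemma zvar_minus_const_rf: "zvar - const_rf \<beta> = to_fract [:-\<beta>, 1:]"
  by (simp add: zvar_def const_rf_def flip: to_fract_diff)

lemma zvar_minus_const_rf_nonzero: "zvar - const_rf \<beta> \<noteq> 0"
  by (simp add: zvar_minus_const_rf)

lemma fract_val_zvar: "fract_val S zvar = (if 0 \<in> S then 1 else 0)"
  using root_count_linear[of S 0] by (simp add: zvar_def fract_val_to_fract)

lemma fract_val_const_rf: "c \<noteq> 0 \<Longrightarrow> fract_val S (const_rf c) = 0"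
  by (simp add: const_rf_def fract_val_to_fract root_count_const)

lemma fract_val_zvar_minus_const_rf: "fract_val S (zvar - const_rf \<beta>) = (if \<beta> \<in> S then 1 else 0)"
  by (simp add: zvar_minus_const_rf fract_val_to_fract root_count_linear)

lemma fract_lead_coeff_zvar: "fract_lead_coeff zvar = 1"
  by (simp add: zvar_def fract_lead_coeff_to_fract)

lemma fract_lead_coeff_const_rf: "c \<noteq> 0 \<Longrightarrow> fract_lead_coeff (const_rf c) = c"
  by (simp add: const_rf_def fract_lead_coeff_to_fract)

lemma fract_lead_coeff_zvar_minus_const_rf: "fract_lead_coeff (zvar - const_rf \<beta>) = 1"
  by (simp add: zvar_minus_const_rf fract_lead_coeff_to_fract)

lemma subst_scale_zvar_minus_const_rf:
  "c \<noteq> 0 \<Longrightarrow> subst_scale c (zvar - const_rf (c * \<beta>)) = const_rf c * (zvar - const_rf \<beta>)"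
  unfolding zvar_minus_const_rf
  by (simp add: const_rf_def subst_scale_to_fract pcompose_pCons algebra_simps flip: to_fract_mult)

definition q_orbit :: "complex \<Rightarrow> complex \<Rightarrow> complex set" where
  "q_orbit q \<gamma> = range (\<lambda>d::int. q powi d * \<gamma>)"

lemma q_orbit_self: "\<gamma> \<in> q_orbit q \<gamma>"
  unfolding q_orbit_def by (rule range_eqI[of _ _ 0]) simp

lemma q_orbit_0: "q_orbit q 0 = {0}"
  unfolding q_orbit_def by auto

lemma zero_notin_q_orbit: "q \<noteq> 0 \<Longrightarrow> \<delta> \<noteq> 0 \<Longrightarrow> 0 \<notin> q_orbit q \<delta>"
  unfolding q_orbit_def by (auto simp: power_int_not_zero)

lemma image_mult_q_orbit: "(*) c ` q_orbit q \<gamma> = q_orbit q (c * \<gamma>)"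
  unfolding q_orbit_def image_image by (simp add: mult_ac)

lemma q_orbit_mult_power_int:
  assumes "q \<noteq> 0"
  shows "q_orbit q (q powi d * \<gamma>) = q_orbit q \<gamma>"
proof (intro equalityI subsetI)
  fix x assume "x \<in> q_orbit q (q powi d * \<gamma>)"
  then obtain e where "x = q powi e * (q powi d * \<gamma>)" unfolding q_orbit_def by blast
  then have "x = q powi (e + d) * \<gamma>" using assms by (simp add: power_int_add)
  then show "x \<in> q_orbit q \<gamma>" unfolding q_orbit_def by blast
next
  fix x assume "x \<in> q_orbit q \<gamma>"
  then obtain e where "x = q powi e * \<gamma>" unfolding q_orbit_def by blast
  then have "x = q powi (e - d) * (q powi d * \<gamma>)" using assms by (simp add: power_int_diff)
  then show "x \<in> q_orbit q (q powi d * \<gamma>)" unfolding q_orbit_def by blast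
qed

lemma mem_q_orbit_iff:
  assumes "q \<noteq> 0"
  shows "\<gamma> \<in> q_orbit q \<delta> \<longleftrightarrow> q_orbit q \<gamma> = q_orbit q \<delta>"
proof
  assume "\<gamma> \<in> q_orbit q \<delta>"
  then obtain e where "\<gamma> = q powi e * \<delta>" unfolding q_orbit_def by auto
  then show "q_orbit q \<gamma> = q_orbit q \<delta>" using q_orbit_mult_power_int[OF assms] by simp
qed (use q_orbit_self in blast)

lemma mult_power_int_mem_q_orbit_iff:
  "q \<noteq> 0 \<Longrightarrow> q powi d * \<gamma> \<in> q_orbit q \<delta> \<longleftrightarrow> \<gamma> \<in> q_orbit q \<delta>"
  by (simp add: mem_q_orbit_iff q_orbit_mult_power_int)

section \<open>Quotients \<open>\<sigma>\<^sub>q(b) / b\<close>\<close>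

definition q_quotient :: "complex \<Rightarrow> ratfun \<Rightarrow> bool" where
  "q_quotient q h \<longleftrightarrow> (\<exists>b. b \<noteq> 0 \<and> h = subst_scale q b / b)"

lemma q_quotient_1: "q \<noteq> 0 \<Longrightarrow> q_quotient q 1"
  unfolding q_quotient_def by (rule exI[of _ 1]) (simp add: subst_scale_1)

lemma q_quotient_mult:
  assumes "q \<noteq> 0" "q_quotient q g" "q_quotient q h"
  shows "q_quotient q (g * h)"
proof -
  obtain b1 b2 where "b1 \<noteq> 0" "g = subst_scale q b1 / b1" "b2 \<noteq> 0" "h = subst_scale q b2 / b2"
    using assms unfolding q_quotient_def by auto
  with assms(1) show ?thesis
    unfolding q_quotient_def by (intro exI[of _ "b1 * b2"]) (simp add: subst_scale_mult)
qed

lemma q_quotient_inverse: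
  assumes "q \<noteq> 0" "q_quotient q g"
  shows "q_quotient q (inverse g)"
proof -
  obtain b where b: "b \<noteq> 0" "g = subst_scale q b / b"
    using assms unfolding q_quotient_def by auto
  then have "inverse g = subst_scale q (inverse b) / inverse b"
    using assms(1) by (simp add: subst_scale_inverse divide_inverse mult.commute)
  with b(1) show ?thesis
    unfolding q_quotient_def by (intro exI[of _ "inverse b"]) simp
qed

lemma q_quotient_power_int:
  assumes "q \<noteq> 0" "q_quotient q g"
  shows "q_quotient q (g powi n)"
proof -
  have pow: "q_quotient q (g ^ m)" for m
    by (induct m) (auto simp: q_quotient_1 q_quotient_mult assms)
  then have "q_quotient q (inverse g ^ m)" for m
    using q_quotient_inverse[OF assms(1)] by (simp add: power_inverse)
  with pow show ?thesis unfolding power_int_def by auto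
qed

lemma q_quotient_const_rf_power_int:
  assumes "q \<noteq> 0"
  shows "q_quotient q (const_rf (q powi n))"
proof -
  have "subst_scale q zvar = const_rf q * zvar"
    using assms
    by (simp add: zvar_def const_rf_def subst_scale_to_fract pcompose_pCons flip: to_fract_mult)
  then have "q_quotient q (const_rf q)"
    unfolding q_quotient_def using zvar_nonzero by (intro exI[of _ zvar]) simp
  with assms show ?thesis
    by (simp add: const_rf_power_int q_quotient_power_int)
qed

lemma q_quotient_linear_factor_shift:
  assumes q: "q \<noteq> 0"
  shows "q_quotient q ((zvar - const_rf \<gamma>) / (zvar - const_rf (q * \<gamma>)))"
proof -
  have "q_quotient q (const_rf q * (zvar - const_rf \<gamma>) / (zvar - const_rf (q * \<gamma>)))"
    unfolding q_quotient_def using q zvar_minus_const_rf_nonzero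
    by (intro exI[of _ "zvar - const_rf (q * \<gamma>)"]) (simp add: subst_scale_zvar_minus_const_rf)
  then have "q_quotient q (const_rf (q powi -1) *
      (const_rf q * (zvar - const_rf \<gamma>) / (zvar - const_rf (q * \<gamma>))))"
    by (intro q_quotient_mult q_quotient_const_rf_power_int q)
  moreover have "const_rf (q powi -1) * const_rf q = 1"
    using q by (simp add: const_rf_def flip: to_fract_mult one_pCons)
  ultimately show ?thesis
    by (simp add: mult.assoc[symmetric])
qed

lemma q_quotient_linear_factors:
  assumes q: "q \<noteq> 0"
  shows "q_quotient q ((zvar - const_rf \<gamma>) / (zvar - const_rf (q powi d * \<gamma>)))"
proof (induct d rule: int_induct[where k = 0])
  case base
  then show ?case using zvar_minus_const_rf_nonzero by (simp add: q_quotient_1 q)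
next
  case (step1 i)
  from q_quotient_mult[OF q step1(2) q_quotient_linear_factor_shift[OF q, of "q powi i * \<gamma>"]]
  show ?case
    using q zvar_minus_const_rf_nonzero by (simp add: power_int_add mult_ac)
next
  case (step2 i)
  have "q * (q powi (i - 1) * \<gamma>) = q powi i * \<gamma>"
    using q by (simp add: power_int_diff)
  with q_quotient_mult[OF q step2(2)
      q_quotient_inverse[OF q q_quotient_linear_factor_shift[OF q, of "q powi (i - 1) * \<gamma>"]]]
  show ?case
    using zvar_minus_const_rf_nonzero by simp
qed

lemma q_quotient_imp_fract_val_q_orbit:
  assumes "q \<noteq> 0" "q_quotient q h"
  shows "fract_val (q_orbit q \<gamma>) h = 0"
proof -
  obtain b where "b \<noteq> 0" "h = subst_scale q b / b"
    using assms(2) unfolding q_quotient_def by auto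
  moreover have "(*) q ` q_orbit q \<gamma> = q_orbit q \<gamma>"
    using q_orbit_mult_power_int[OF assms(1), of 1] by (simp add: image_mult_q_orbit)
  ultimately show ?thesis
    using assms(1) by (simp add: fract_val_divide subst_scale_eq_0_iff fract_val_subst_scale)
qed

lemma q_quotient_imp_lead_coeff:
  assumes "q \<noteq> 0" "q_quotient q h"
  shows "\<exists>n. fract_lead_coeff h = q powi n"
proof -
  obtain b where "b \<noteq> 0" "h = subst_scale q b / b"
    using assms(2) unfolding q_quotient_def by auto
  with assms(1) show ?thesis
    by (auto simp: fract_lead_coeff_divide subst_scale_eq_0_iff fract_lead_coeff_subst_scale
        fract_lead_coeff_nonzero)
qed

text \<open>Conversely, zeros and poles that cancel along every \<open>q\<close>-orbit pair off into quotients
  of linear factors as in \<open>q_quotient_linear_factors\<close>, and the remaining constant is a power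
  of \<open>q\<close>.\<close>

lemma q_quotient_Fract_const:
  assumes "q \<noteq> 0" "a \<noteq> 0" "b \<noteq> 0" "a / b = q powi n"
  shows "q_quotient q (Fract [:a:] [:b:])"
proof -
  have "Fract [:a:] [:b:] = const_rf (a / b)"
    using assms(3) by (simp add: const_rf_def to_fract_def eq_fract flip: one_pCons)
  with assms show ?thesis by (simp add: q_quotient_const_rf_power_int)
qed

lemma root_in_q_orbit_transfer:
  assumes "p \<noteq> 0" "poly p \<gamma> = 0"
    and "root_count (q_orbit q \<gamma>) p = root_count (q_orbit q \<gamma>) r"
  obtains d where "poly r (q powi d * \<gamma>) = 0"
proof -
  have "root_count (q_orbit q \<gamma>) r \<noteq> 0"
    using root_count_pos[OF assms(1,2) q_orbit_self[of \<gamma> q]] assms(3) by simp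
  then obtain \<gamma>' where "\<gamma>' \<in> q_orbit q \<gamma>" "poly r \<gamma>' = 0"
    using root_count_nonzero_imp_root by blast
  with that show ?thesis unfolding q_orbit_def by auto
qed

lemma q_quotient_Fract:
  assumes "q \<noteq> 0" "p \<noteq> 0" "r \<noteq> 0"
    and "\<forall>\<gamma>. fract_val (q_orbit q \<gamma>) (Fract p r) = 0"
    and "fract_lead_coeff (Fract p r) = q powi n"
  shows "q_quotient q (Fract p r)"
  using assms(2-)
proof (induction "degree p + degree r" arbitrary: p r rule: less_induct)
  case (less p r)
  have count_eq: "root_count (q_orbit q \<gamma>) p = root_count (q_orbit q \<gamma>) r" for \<gamma>
    using less.prems(3) fract_val_Fract[OF less.prems(1,2)] by simp
  show ?case
  proof (cases "\<exists>\<gamma>. poly p \<gamma> = 0")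
    case True
    then obtain \<gamma> where \<gamma>: "poly p \<gamma> = 0" by blast
    then obtain d where "poly r (q powi d * \<gamma>) = 0"
      using root_in_q_orbit_transfer[OF less.prems(1) _ count_eq] by blast
    with \<gamma> obtain p1 r1 where p1: "p = [:-\<gamma>, 1:] * p1" and r1: "r = [:-(q powi d * \<gamma>), 1:] * r1"
      by (auto simp: poly_eq_0_iff_dvd elim!: dvdE)
    then have "p1 \<noteq> 0" "r1 \<noteq> 0" using less.prems(1,2) by auto
    define L where "L = (zvar - const_rf \<gamma>) / (zvar - const_rf (q powi d * \<gamma>))"
    have "L \<noteq> 0" "fract_lead_coeff L = 1" "fract_val (q_orbit q \<delta>) L = 0" for \<delta>
      using zvar_minus_const_rf_nonzero mult_power_int_mem_q_orbit_iff[OF assms(1)]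
      by (simp_all add: L_def fract_lead_coeff_divide fract_lead_coeff_zvar_minus_const_rf
          fract_val_divide fract_val_zvar_minus_const_rf)
    have "Fract p1 r1 \<noteq> 0" using \<open>p1 \<noteq> 0\<close> \<open>r1 \<noteq> 0\<close> by (simp add: Zero_fract_def eq_fract)
    have split: "Fract p r = Fract p1 r1 * L"
      unfolding L_def zvar_minus_const_rf p1 r1 using \<open>p1 \<noteq> 0\<close> \<open>r1 \<noteq> 0\<close>
      by (simp add: to_fract_def eq_fract mult_ac)
    have "\<forall>\<delta>. fract_val (q_orbit q \<delta>) (Fract p1 r1) = 0"
      using less.prems(3) \<open>Fract p1 r1 \<noteq> 0\<close> \<open>L \<noteq> 0\<close> \<open>fract_val _ L = 0\<close>
      by (simp add: split fract_val_mult)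
    moreover have "fract_lead_coeff (Fract p1 r1) = q powi n"
      using less.prems(4) \<open>Fract p1 r1 \<noteq> 0\<close> \<open>L \<noteq> 0\<close> \<open>fract_lead_coeff L = 1\<close>
      by (simp add: split fract_lead_coeff_mult)
    moreover have "degree p1 + degree r1 < degree p + degree r"
      using \<open>p1 \<noteq> 0\<close> \<open>r1 \<noteq> 0\<close> unfolding p1 r1 by (subst (1 2) degree_mult_eq) auto
    ultimately have "q_quotient q (Fract p1 r1)"
      using less.hyps \<open>p1 \<noteq> 0\<close> \<open>r1 \<noteq> 0\<close> by blast
    moreover have "q_quotient q L"
      unfolding L_def by (rule q_quotient_linear_factors[OF assms(1)])
    ultimately show ?thesis
      unfolding split by (rule q_quotient_mult[OF assms(1)])
  next
    case False
    then have "poly r \<gamma> \<noteq> 0" for \<gamma>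
      using root_in_q_orbit_transfer[OF less.prems(2) _ count_eq[symmetric]] by metis
    with False obtain a b where "p = [:a:]" "r = [:b:]"
      using fundamental_theorem_of_algebra_alt by metis
    with less.prems show ?thesis
      by (simp add: q_quotient_Fract_const[OF assms(1)] fract_lead_coeff_Fract)
  qed
qed

lemma q_quotient_iff:
  assumes "q \<noteq> 0" "h \<noteq> 0"
  shows "q_quotient q h \<longleftrightarrow>
    (\<forall>\<gamma>. fract_val (q_orbit q \<gamma>) h = 0) \<and> (\<exists>n. fract_lead_coeff h = q powi n)"
  using assms q_quotient_imp_fract_val_q_orbit q_quotient_imp_lead_coeff
  by (auto elim: fract_nonzero_cases intro: q_quotient_Fract)

section \<open>Roots of unity and the discrete Fourier transform\<close>

lemma primitive_root_of_unity_nonzero: "primitive_root_of_unity t \<zeta> \<Longrightarrow> \<zeta> \<noteq> 0"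
  unfolding primitive_root_of_unity_def by (metis power_0_left zero_neq_one less_not_refl3)

lemma primitive_root_of_unity_power_mod:
  assumes "primitive_root_of_unity t \<zeta>"
  shows "\<zeta> ^ m = \<zeta> ^ (m mod t)"
proof -
  have "\<zeta> ^ m = (\<zeta> ^ t) ^ (m div t) * \<zeta> ^ (m mod t)"
    by (simp flip: power_mult power_add)
  with assms show ?thesis unfolding primitive_root_of_unity_def by simp
qed

lemma primitive_root_of_unity_power_eq_iff:
  assumes "primitive_root_of_unity t \<zeta>"
  shows "\<zeta> ^ a = \<zeta> ^ b \<longleftrightarrow> a mod t = b mod t"
proof
  have less: "u = v" if "u < t" "v < t" "\<zeta> ^ u = \<zeta> ^ v" "u \<le> v" for u v
  proof (rule ccontr)
    assume "u \<noteq> v"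
    have "\<zeta> ^ v = \<zeta> ^ u * \<zeta> ^ (v - u)" using \<open>u \<le> v\<close> by (simp flip: power_add)
    then have "\<zeta> ^ (v - u) = 1"
      using that(3) primitive_root_of_unity_nonzero[OF assms] by simp
    with assms \<open>u \<noteq> v\<close> that show False unfolding primitive_root_of_unity_def by auto
  qed
  assume "\<zeta> ^ a = \<zeta> ^ b"
  then have "\<zeta> ^ (a mod t) = \<zeta> ^ (b mod t)"
    by (simp flip: primitive_root_of_unity_power_mod[OF assms])
  moreover have "a mod t < t" "b mod t < t"
    using assms unfolding primitive_root_of_unity_def by auto
  ultimately show "a mod t = b mod t"
    using less by (metis nle_le)
qed (simp add: primitive_root_of_unity_power_mod[OF assms, of a]
    primitive_root_of_unity_power_mod[OF assms, of b])

lemma primitive_root_of_unity_power_eq_1_iff: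
  "primitive_root_of_unity t \<zeta> \<Longrightarrow> \<zeta> ^ m = 1 \<longleftrightarrow> m mod t = 0"
  using primitive_root_of_unity_power_eq_iff[of t \<zeta> m 0] by simp

lemma primitive_root_of_unity_power_power_eq_1:
  "primitive_root_of_unity t \<zeta> \<Longrightarrow> (\<zeta> ^ m) ^ t = 1"
proof -
  have "(\<zeta> ^ m) ^ t = (\<zeta> ^ t) ^ m" by (simp add: mult.commute flip: power_mult)
  then show "primitive_root_of_unity t \<zeta> \<Longrightarrow> (\<zeta> ^ m) ^ t = 1"
    unfolding primitive_root_of_unity_def by simp
qed

lemma norm_primitive_root_of_unity:
  assumes "primitive_root_of_unity t \<zeta>"
  shows "norm \<zeta> = 1"
proof -
  have "norm \<zeta> ^ t = 1 ^ t"
    using assms unfolding primitive_root_of_unity_def by (simp flip: norm_power)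
  then show ?thesis
    by (rule power_eq_imp_eq_base) (use assms in \<open>auto simp: primitive_root_of_unity_def\<close>)
qed

lemma primitive_root_of_unity_inverse:
  "primitive_root_of_unity t \<zeta> \<Longrightarrow> primitive_root_of_unity t (inverse \<zeta>)"
  unfolding primitive_root_of_unity_def by (auto simp: power_inverse)

lemma dft_eq_0_imp_eq_0:
  fixes f :: "nat \<Rightarrow> complex"
  assumes \<zeta>: "primitive_root_of_unity t \<zeta>"
    and dft: "\<forall>m<t. (\<Sum>l<t. \<zeta> ^ (m * l) * f l) = 0"
    and "l0 < t"
  shows "f l0 = 0"
proof -
  define \<rho> where "\<rho> l = \<zeta> ^ l * inverse \<zeta> ^ l0" for l
  have \<rho>t: "\<rho> l ^ t = 1" for l
    unfolding \<rho>_def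
    by (simp add: power_mult_distrib primitive_root_of_unity_power_power_eq_1[OF \<zeta>]
        primitive_root_of_unity_power_power_eq_1[OF primitive_root_of_unity_inverse[OF \<zeta>]])
  have \<rho>1: "\<rho> l = 1 \<longleftrightarrow> l = l0" if "l < t" for l
    using primitive_root_of_unity_power_eq_iff[OF \<zeta>, of l l0] primitive_root_of_unity_nonzero[OF \<zeta>]
      that \<open>l0 < t\<close> by (auto simp: \<rho>_def power_inverse field_simps)
  have "0 = (\<Sum>m<t. inverse \<zeta> ^ (m * l0) * (\<Sum>l<t. \<zeta> ^ (m * l) * f l))"
    using dft by simp
  also have "\<dots> = (\<Sum>l<t. f l * (\<Sum>m<t. \<rho> l ^ m))"
    unfolding sum_distrib_left
    by (subst sum.swap) (simp add: \<rho>_def power_mult_distrib mult_ac flip: power_mult)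
  also have "\<dots> = (\<Sum>l<t. if l = l0 then f l * of_nat t else 0)"
    by (intro sum.cong refl) (auto simp: \<rho>1 \<rho>t sum_gp_strict)
  also have "\<dots> = f l0 * of_nat t"
    using \<open>l0 < t\<close> by simp
  finally show ?thesis
    using \<zeta> unfolding primitive_root_of_unity_def by simp
qed

lemma norm_power_int_eq_1_imp_eq_0:
  fixes q :: complex
  assumes "norm q > 1" "norm (q powi d) = 1"
  shows "d = 0"
proof (rule ccontr)
  assume "d \<noteq> 0"
  then have "norm q ^ nat \<bar>d\<bar> > 1"
    using assms(1) by (intro one_less_power) auto
  then have "norm q powi d \<noteq> 1"
    by (cases "d > 0") (auto simp: power_int_def power_inverse)
  with assms(2) show False by (simp add: norm_power_int)
qed

lemma root_of_unity_if_power_int_eq_1: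
  assumes "lam powi m = 1" "m \<noteq> 0"
  shows "root_of_unity lam"
proof -
  have "lam ^ nat \<bar>m\<bar> = 1"
    using assms by (cases "m > 0") (auto simp: power_int_def power_inverse)
  with assms(2) show ?thesis unfolding root_of_unity_def by (intro exI[of _ "nat \<bar>m\<bar>"]) simp
qed

lemma power_int_eq_q_power_int_if_meet:
  assumes "nontriv_meet lam q \<or> root_of_unity lam"
  obtains m e where "m \<noteq> 0" "lam powi m = q powi e"
proof (cases "root_of_unity lam")
  case True
  then obtain p :: nat where "p > 0" "lam ^ p = 1" unfolding root_of_unity_def by blast
  then show ?thesis using that[of "int p" 0] by simp
next
  case False
  with assms obtain m e where "lam powi m = q powi e" "lam powi m \<noteq> 1"
    unfolding nontriv_meet_def by blast
  moreover from this have "m \<noteq> 0" by auto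
  ultimately show ?thesis using that by blast
qed

lemma power_int_eq_q_power_int_imp_eq_0:
  assumes "\<not> nontriv_meet lam q" "\<not> root_of_unity lam" "lam powi m = q powi e"
  shows "m = 0"
proof (rule ccontr)
  assume "m \<noteq> 0"
  from assms(1,3) have "lam powi m = 1" unfolding nontriv_meet_def by blast
  with \<open>m \<noteq> 0\<close> assms(2) show False using root_of_unity_if_power_int_eq_1 by blast
qed

lemma bij_betw_add_mod:
  fixes j t :: nat
  assumes "j < t"
  shows "bij_betw (\<lambda>l. (l + j) mod t) {..<t} {..<t}"
proof -
  have cancel: "((l + k) mod t + (t - k)) mod t = l" if "l < t" "k \<le> t" for l k
  proof -
    have "((l + k) mod t + (t - k)) mod t = (l + k + (t - k)) mod t"
      by (simp add: mod_add_left_eq)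
    also have "l + k + (t - k) = l + t" using that(2) by simp
    finally show ?thesis using that(1) by simp
  qed
  show ?thesis
    by (rule bij_betw_byWitness[of _ "\<lambda>u. (u + (t - j)) mod t"])
      (use cancel[of _ j] cancel[of _ "t - j"] assms in auto)
qed

lemma minus_mod_minus_mod: "(j::nat) < t \<Longrightarrow> (t - (t - j) mod t) mod t = j"
  by (cases "j = 0") auto

lemma bij_betw_minus_mod: "bij_betw (\<lambda>j. (t - j) mod t) {..<t::nat} {..<t}"
  by (intro bij_betw_byWitness[of _ "\<lambda>j. (t - j) mod t"]) (auto simp: minus_mod_minus_mod)

section \<open>Rational polynomials vanishing at a root of unity\<close>

lemma map_poly_of_rat_add: "map_poly of_rat (p + q) = map_poly of_rat p + map_poly of_rat q"
  by (rule poly_eqI) (simp add: coeff_map_poly of_rat_add)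

lemma map_poly_of_rat_diff: "map_poly of_rat (p - q) = map_poly of_rat p - map_poly of_rat q"
  by (rule poly_eqI) (simp add: coeff_map_poly of_rat_diff)

lemma map_poly_of_rat_mult: "map_poly of_rat (p * q) = map_poly of_rat p * map_poly of_rat q"
  by (rule poly_eqI) (simp add: coeff_map_poly coeff_mult of_rat_sum of_rat_mult)

lemma poly_map_of_rat_sum_monom:
  "poly (map_poly of_rat (\<Sum>u<n. monom (c u) u)) x = (\<Sum>u<n. of_rat (c u) * x ^ u)"
  by (induct n) (simp_all add: map_poly_of_rat_add map_poly_monom poly_monom)

lemma poly_map_of_rat_sum_monom_of_int_power:
  fixes z :: "'a::field_char_0"
  shows "poly (map_poly of_rat (\<Sum>u<n. monom (of_int (c u)) u)) (z ^ m) =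
    (\<Sum>u<n. z ^ (m * u) * of_int (c u))"
  unfolding poly_map_of_rat_sum_monom
  by (rule sum.cong[OF refl]) (simp add: power_mult[symmetric] mult.commute)

lemma sum_monom_coeff: "degree p < n \<Longrightarrow> (\<Sum>u<n. monom (coeff p u) u) = p"
  using poly_as_sum_of_monoms'[of p "n - 1"] by (cases n) (simp_all add: lessThan_Suc_atMost)

lemma rat_min_poly_exists:
  fixes \<omega> :: complex
  assumes "Q \<noteq> 0" "poly (map_poly of_rat Q) \<omega> = 0"
  obtains P where "P \<noteq> 0" "poly (map_poly of_rat P) \<omega> = 0"
    "\<And>B. poly (map_poly of_rat B) \<omega> = 0 \<Longrightarrow> P dvd B"
proof -
  define vanishes where "vanishes P \<longleftrightarrow> P \<noteq> 0 \<and> poly (map_poly of_rat P) \<omega> = 0" for P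
  obtain P where P: "vanishes P" and min: "\<And>P'. vanishes P' \<Longrightarrow> degree P \<le> degree P'"
    using ex_has_least_nat[of vanishes Q degree] assms unfolding vanishes_def by blast
  have "P dvd B" if B: "poly (map_poly of_rat B) \<omega> = 0" for B
  proof (rule ccontr)
    assume "\<not> P dvd B"
    then have "B mod P \<noteq> 0" by (simp add: dvd_eq_mod_eq_0)
    have "B = B div P * P + B mod P" by simp
    then have "poly (map_poly of_rat B) \<omega> =
        poly (map_poly of_rat (B div P)) \<omega> * poly (map_poly of_rat P) \<omega> +
        poly (map_poly of_rat (B mod P)) \<omega>"
      by (metis map_poly_of_rat_add map_poly_of_rat_mult poly_add poly_mult)
    then have "poly (map_poly of_rat (B mod P)) \<omega> = 0"
      using B P unfolding vanishes_def by simp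
    with \<open>B mod P \<noteq> 0\<close> have "degree P \<le> degree (B mod P)"
      using min unfolding vanishes_def by blast
    moreover have "degree (B mod P) < degree P"
      using P \<open>B mod P \<noteq> 0\<close> unfolding vanishes_def by (simp add: degree_mod_less')
    ultimately show False by simp
  qed
  with P that show ?thesis unfolding vanishes_def by blast
qed

text \<open>If \<open>P\<close> is the minimal polynomial of \<open>\<omega>\<close>, then \<open>W = (X\<^sup>t - 1) / P\<close> is nonzero at
  a \<open>t\<close>-th root of unity \<open>x\<close> only if \<open>P(x) = 0\<close>, i.e. only at the conjugates of \<open>\<omega>\<close>.\<close>

lemma rat_poly_nonzero_only_at_conjugates:
  fixes \<omega> :: complex
  assumes "0 < t" "\<omega> ^ t = 1" "\<omega> \<noteq> 1"
  obtains W :: "rat poly"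
  where "W \<noteq> 0" "degree W < t" "poly (map_poly of_rat W) (1::complex) = 0"
    "\<And>(x::complex) B. x ^ t = 1 \<Longrightarrow> poly (map_poly of_rat W) x \<noteq> 0 \<Longrightarrow>
       poly (map_poly of_rat B) \<omega> = 0 \<Longrightarrow> poly (map_poly of_rat B) x = 0"
proof -
  define \<Psi> :: "rat poly" where "\<Psi> = (\<Sum>u<t. monom 1 u)"
  have poly_\<Psi>: "poly (map_poly of_rat \<Psi>) x = (\<Sum>u<t. x ^ u)" for x :: complex
    unfolding \<Psi>_def poly_map_of_rat_sum_monom by simp
  have X_minus_1: "[:-1, 1:] * (\<Sum>u<n. monom 1 u) = monom (1::rat) n - 1" for n
  proof (induct n)
    case (Suc n)
    have "[:-1, 1:] * monom (1::rat) n = monom 1 (Suc n) - monom 1 n"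
      by (simp add: monom_Suc algebra_simps)
    with Suc show ?case by (simp add: algebra_simps)
  qed simp
  have "\<Psi> \<noteq> 0"
    using poly_\<Psi>[of 1] \<open>0 < t\<close> by auto
  moreover have "poly (map_poly of_rat \<Psi>) \<omega> = 0"
    using assms by (simp add: poly_\<Psi> sum_gp_strict)
  ultimately obtain P where P: "P \<noteq> 0" "poly (map_poly of_rat P) \<omega> = 0"
    and P_dvd: "\<And>B. poly (map_poly of_rat B) \<omega> = 0 \<Longrightarrow> P dvd B"
    using rat_min_poly_exists by blast
  obtain Q where Q: "\<Psi> = P * Q" using P_dvd \<open>poly (map_poly of_rat \<Psi>) \<omega> = 0\<close> by blast
  define W where "W = [:-1, 1:] * Q"
  have PW: "P * W = monom 1 t - 1"
  proof -
    have "P * W = [:-1, 1:] * \<Psi>" unfolding W_def Q by (simp only: mult.left_commute)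
    then show ?thesis unfolding \<Psi>_def X_minus_1 .
  qed
  have "degree (monom (1::rat) t + (- 1)) = degree (monom (1::rat) t)"
    by (rule degree_add_eq_left) (use \<open>0 < t\<close> in \<open>simp add: degree_monom_eq\<close>)
  then have deg_t: "degree (monom (1::rat) t - 1) = t"
    by (simp add: degree_monom_eq)
  then have "W \<noteq> 0" using PW \<open>0 < t\<close> by auto
  have "degree P > 0"
  proof (rule ccontr)
    assume "\<not> degree P > 0"
    then have "P = [:coeff P 0:]" using degree_0_id[of P] by simp
    then obtain c where "P = [:c:]" by blast
    with P show False by (auto simp: map_poly_pCons)
  qed
  then have "degree W < t"
    using degree_mult_eq[OF \<open>P \<noteq> 0\<close> \<open>W \<noteq> 0\<close>] PW deg_t by simp
  moreover have "poly (map_poly of_rat W) (1::complex) = 0"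
    unfolding W_def map_poly_of_rat_mult by (simp add: map_poly_pCons)
  moreover have "poly (map_poly of_rat B) x = 0"
    if root: "x ^ t = 1" and W: "poly (map_poly of_rat W) x \<noteq> 0"
      and B: "poly (map_poly of_rat B) \<omega> = 0" for x B
  proof -
    have "poly (map_poly of_rat P) x * poly (map_poly of_rat W) x = 0"
      using root by (simp flip: poly_mult map_poly_of_rat_mult add: PW map_poly_of_rat_diff
          map_poly_monom poly_monom)
    then have "poly (map_poly of_rat P) x = 0" using W by simp
    moreover obtain C where "B = P * C" using P_dvd[OF B] by blast
    ultimately show ?thesis by (simp add: map_poly_of_rat_mult)
  qed
  ultimately show ?thesis using that \<open>W \<noteq> 0\<close> by blast
qed

lemma rat_common_denominator:
  fixes c :: "nat \<Rightarrow> rat"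
  shows "\<exists>(D::int) g. D > 0 \<and> (\<forall>u<t. of_int (g u) = of_int D * c u)"
proof -
  define D where "D = (\<Prod>u<t. snd (quotient_of (c u)))"
  define g where "g u = fst (quotient_of (c u)) * (D div snd (quotient_of (c u)))" for u
  have "D > 0" unfolding D_def by (rule prod_pos) (simp add: quotient_of_denom_pos')
  moreover have "of_int (g u) = of_int D * c u" if "u < t" for u
  proof -
    obtain a b where ab: "quotient_of (c u) = (a, b)" by fastforce
    have "b > 0" using quotient_of_denom_pos[OF ab] .
    have "b dvd D" unfolding D_def using that ab
      by (metis dvd_prod_eqI finite_lessThan lessThan_iff snd_conv)
    then have D: "D = b * (D div b)" by simp
    have "(of_int a * of_int (D div b) :: rat) = of_int D * (of_int a / of_int b)"
      using \<open>b > 0\<close> by (subst (2) D) (simp add: field_simps)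
    then show ?thesis unfolding g_def ab by (simp add: quotient_of_div[OF ab])
  qed
  ultimately show ?thesis by blast
qed

lemma fract_val_subst_scale_funpow:
  assumes "c \<noteq> 0" "g \<noteq> 0"
  shows "fract_val S ((subst_scale c ^^ j) g) = fract_val ((*) (c ^ j) ` S) g"
proof (induct j arbitrary: S)
  case (Suc j)
  then show ?case
    using assms by (simp add: fract_val_subst_scale subst_scale_funpow_eq_0_iff image_image mult_ac)
qed simp

lemma fract_degree_subst_scale_funpow:
  "c \<noteq> 0 \<Longrightarrow> g \<noteq> 0 \<Longrightarrow> fract_degree ((subst_scale c ^^ j) g) = fract_degree g"
  by (induct j) (simp_all add: fract_degree_subst_scale subst_scale_funpow_eq_0_iff)

lemma fract_lead_coeff_subst_scale_funpow:
  assumes "c \<noteq> 0" "g \<noteq> 0"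
  shows "fract_lead_coeff ((subst_scale c ^^ j) g) = (c ^ j) powi fract_degree g * fract_lead_coeff g"
  by (induct j) (simp_all add: assms fract_lead_coeff_subst_scale subst_scale_funpow_eq_0_iff
      fract_degree_subst_scale_funpow power_int_mult_distrib)

lemma phi_nonzero: "c \<noteq> 0 \<Longrightarrow> g \<noteq> 0 \<Longrightarrow> phi c t n g \<noteq> 0"
  by (simp add: phi_def subst_scale_funpow_eq_0_iff power_int_not_zero)

lemma phi_scale_exponents: "phi c t (\<lambda>j. M * n j) g = phi c t n g powi M"
  by (simp add: phi_def prod_power_int_distrib mult.commute[of M] power_int_mult)

lemma fract_val_phi:
  assumes "c \<noteq> 0" "g \<noteq> 0"
  shows "fract_val S (phi c t n g) = (\<Sum>j<t. n j * fract_val ((*) (c ^ j) ` S) g)"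
  using assms
  by (simp add: phi_def fract_val_prod fract_val_power_int power_int_not_zero
      subst_scale_funpow_eq_0_iff fract_val_subst_scale_funpow)

lemma fract_lead_coeff_phi:
  assumes "c \<noteq> 0" "g \<noteq> 0"
  shows "fract_lead_coeff (phi c t n g) =
    (\<Prod>j<t. ((c ^ j) powi fract_degree g * fract_lead_coeff g) powi n j)"
  using assms
  by (simp add: phi_def fract_lead_coeff_prod fract_lead_coeff_power_int power_int_not_zero
      subst_scale_funpow_eq_0_iff fract_lead_coeff_subst_scale_funpow)

section \<open>Valuations of \<open>\<phi>(a)\<close> along \<open>q\<close>-orbits\<close>

locale a_factorization =
  fixes q \<zeta> lam :: complex and t R :: nat and T N :: int
    and r :: "nat \<Rightarrow> complex" and s :: "nat \<Rightarrow> int \<Rightarrow> nat \<Rightarrow> int"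
  assumes norm_q: "norm q > 1"
    and t_ge_2: "t \<ge> 2"
    and \<zeta>: "primitive_root_of_unity t \<zeta>"
    and lam_nonzero: "lam \<noteq> 0"
    and r_nonzero: "\<forall>i\<in>{1..R}. r i \<noteq> 0"
    and r_distinct: "\<forall>i\<in>{1..R}. \<forall>j\<in>{1..R}. i \<noteq> j \<longrightarrow>
           \<not> (\<exists>m n :: int. r i = \<zeta> powi m * q powi n * r j)"
begin

abbreviation a :: ratfun where
  "a \<equiv> a_rf q \<zeta> t lam T N R r s"

lemma q_nonzero: "q \<noteq> 0"
  using norm_q by auto

lemma t_pos: "t > 0"
  using t_ge_2 by simp

lemma \<zeta>_nonzero: "\<zeta> \<noteq> 0"
  using primitive_root_of_unity_nonzero[OF \<zeta>] .

lemma zvar_ne_const_rf: "zvar \<noteq> const_rf \<beta>"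
  using zvar_minus_const_rf_nonzero[of \<beta>] by simp

lemma a_nonzero: "a \<noteq> 0"
  by (simp add: a_rf_def zvar_nonzero const_rf_eq_0_iff lam_nonzero power_int_not_zero
      zvar_ne_const_rf)

lemma fract_val_a: "fract_val S a = (if 0 \<in> S then T else 0) +
   (\<Sum>k<t. \<Sum>d\<in>{-N-1..N}. \<Sum>i\<in>{1..R}. s k d i * (if \<zeta> ^ k * q powi d * r i \<in> S then 1 else 0))"
  by (simp add: a_rf_def zvar_nonzero const_rf_eq_0_iff lam_nonzero power_int_not_zero
      zvar_ne_const_rf fract_val_mult fract_val_prod fract_val_power_int
      fract_val_const_rf fract_val_zvar fract_val_zvar_minus_const_rf)

lemma fract_lead_coeff_a: "fract_lead_coeff a = lam"
  by (simp add: a_rf_def zvar_nonzero const_rf_eq_0_iff lam_nonzero power_int_not_zero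
      zvar_ne_const_rf fract_lead_coeff_mult fract_lead_coeff_prod
      fract_lead_coeff_power_int fract_lead_coeff_const_rf fract_lead_coeff_zvar
      fract_lead_coeff_zvar_minus_const_rf)

lemma fract_val_a_q_orbit_0: "fract_val (q_orbit q 0) a = T"
  using r_nonzero \<zeta>_nonzero q_nonzero by (simp add: fract_val_a q_orbit_0 power_int_not_zero)

lemma fract_val_a_q_orbit:
  assumes "\<delta> \<noteq> 0"
  shows "fract_val (q_orbit q \<delta>) a =
    (\<Sum>k<t. \<Sum>i\<in>{1..R}. aik N s i k * (if \<zeta> ^ k * r i \<in> q_orbit q \<delta> then 1 else 0))"
proof -
  have "\<zeta> ^ k * q powi d * r i \<in> q_orbit q \<delta> \<longleftrightarrow> \<zeta> ^ k * r i \<in> q_orbit q \<delta>" for k d i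
    using mult_power_int_mem_q_orbit_iff[OF q_nonzero, of d "\<zeta> ^ k * r i"] by (simp add: mult_ac)
  then have "fract_val (q_orbit q \<delta>) a =
      (\<Sum>k<t. \<Sum>d\<in>{-N-1..N}. \<Sum>i\<in>{1..R}. s k d i * (if \<zeta> ^ k * r i \<in> q_orbit q \<delta> then 1 else 0))"
    using zero_notin_q_orbit[OF q_nonzero assms] by (simp add: fract_val_a)
  also have "\<dots> =
      (\<Sum>k<t. \<Sum>i\<in>{1..R}. \<Sum>d\<in>{-N-1..N}. s k d i * (if \<zeta> ^ k * r i \<in> q_orbit q \<delta> then 1 else 0))"
    by (rule sum.cong[OF refl], rule sum.swap)
  finally show ?thesis
    by (simp add: aik_def sum_distrib_right)
qed

text \<open>This is where the hypothesis that the \<open>r\<^sub>i\<close> are distinct modulo \<open>\<zeta>\<^sup>\<int>q\<^sup>\<int>\<close> and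
  \<open>|q| > 1\<close> enter.\<close>

lemma \<zeta>_power_mult_r_mem_q_orbit_iff:
  assumes "i \<in> {1..R}" "i0 \<in> {1..R}"
  shows "\<zeta> ^ k * r i \<in> q_orbit q (\<zeta> ^ k0 * r i0) \<longleftrightarrow> i = i0 \<and> k mod t = k0 mod t"
proof
  assume "\<zeta> ^ k * r i \<in> q_orbit q (\<zeta> ^ k0 * r i0)"
  then obtain d where d: "\<zeta> ^ k * r i = q powi d * (\<zeta> ^ k0 * r i0)"
    unfolding q_orbit_def by auto
  have "i = i0"
  proof (rule ccontr)
    assume "i \<noteq> i0"
    have "r i = \<zeta> ^ k * r i / \<zeta> ^ k"
      using \<zeta>_nonzero by simp
    also have "\<dots> = \<zeta> ^ k0 / \<zeta> ^ k * q powi d * r i0"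
      unfolding d by (simp add: field_simps)
    also have "\<zeta> ^ k0 / \<zeta> ^ k = \<zeta> powi (int k0 - int k)"
      using \<zeta>_nonzero by (simp add: power_int_diff)
    finally have "r i = \<zeta> powi (int k0 - int k) * q powi d * r i0" .
    with r_distinct assms \<open>i \<noteq> i0\<close> show False by blast
  qed
  then have "\<zeta> ^ k = q powi d * \<zeta> ^ k0"
    using d r_nonzero assms by simp
  then have "norm (\<zeta> ^ k) = norm (q powi d) * norm (\<zeta> ^ k0)"
    by (simp add: norm_mult)
  then have "norm (q powi d) = 1"
    by (simp add: norm_power norm_primitive_root_of_unity[OF \<zeta>])
  then have "d = 0" by (rule norm_power_int_eq_1_imp_eq_0[OF norm_q])
  with \<open>\<zeta> ^ k = q powi d * \<zeta> ^ k0\<close> \<open>i = i0\<close> show "i = i0 \<and> k mod t = k0 mod t"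
    by (simp add: primitive_root_of_unity_power_eq_iff[OF \<zeta>])
next
  assume "i = i0 \<and> k mod t = k0 mod t"
  then show "\<zeta> ^ k * r i \<in> q_orbit q (\<zeta> ^ k0 * r i0)"
    by (simp add: primitive_root_of_unity_power_eq_iff[OF \<zeta>, symmetric] q_orbit_self)
qed

lemma q_orbit_cases:
  assumes "\<gamma> \<noteq> 0"
  obtains "\<forall>j<t. \<forall>k<t. \<forall>i\<in>{1..R}. \<zeta> ^ k * r i \<notin> q_orbit q (\<zeta> ^ j * \<gamma>)"
  | l i0 e where "l < t" "i0 \<in> {1..R}" "\<gamma> = q powi e * (\<zeta> ^ l * r i0)"
proof (cases "\<forall>j<t. \<forall>k<t. \<forall>i\<in>{1..R}. \<zeta> ^ k * r i \<notin> q_orbit q (\<zeta> ^ j * \<gamma>)")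
  case False
  then obtain j k i where jki: "j < t" "i \<in> {1..R}" "\<zeta> ^ k * r i \<in> q_orbit q (\<zeta> ^ j * \<gamma>)"
    by blast
  then obtain d where d: "\<zeta> ^ k * r i = q powi d * (\<zeta> ^ j * \<gamma>)" unfolding q_orbit_def by auto
  define l where "l = (k + (t - j)) mod t"
  have "\<zeta> ^ l * \<zeta> ^ j = \<zeta> ^ (k + (t - j) + j)"
    unfolding l_def by (simp add: power_add flip: primitive_root_of_unity_power_mod[OF \<zeta>])
  also have "\<dots> = \<zeta> ^ k"
    using \<zeta> \<open>j < t\<close> by (simp add: power_add primitive_root_of_unity_def)
  finally have "\<zeta> ^ l * \<zeta> ^ j * r i = q powi d * (\<zeta> ^ j * \<gamma>)"
    using d by simp
  then have "\<gamma> = q powi (-d) * (\<zeta> ^ l * r i)"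
    using \<zeta>_nonzero q_nonzero by (simp add: power_int_minus field_simps)
  moreover have "l < t" unfolding l_def using t_pos by simp
  ultimately show ?thesis using that(2) jki(2) by blast
qed (use that in blast)

text \<open>The valuation of \<open>\<phi>(a)\<close> along the \<open>q\<close>-orbit of \<open>\<zeta>\<^sup>l r\<^sub>i\<close>.\<close>

definition orbit_exponent :: "(nat \<Rightarrow> int) \<Rightarrow> nat \<Rightarrow> nat \<Rightarrow> int" where
  "orbit_exponent n i l = (\<Sum>j<t. n j * aik N s i ((l + j) mod t))"

lemma fract_val_phi_a_q_orbit:
  "fract_val (q_orbit q \<gamma>) (phi \<zeta> t n a) = (\<Sum>j<t. n j * fract_val (q_orbit q (\<zeta> ^ j * \<gamma>)) a)"
  by (simp add: fract_val_phi[OF \<zeta>_nonzero a_nonzero] image_mult_q_orbit)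

lemma fract_val_phi_a_q_orbit_0: "fract_val (q_orbit q 0) (phi \<zeta> t n a) = T * (\<Sum>j<t. n j)"
  by (simp add: fract_val_phi_a_q_orbit fract_val_a_q_orbit_0 sum_distrib_left mult.commute)

lemma fract_val_phi_a_q_orbit_r:
  assumes "l < t" "i0 \<in> {1..R}"
  shows "fract_val (q_orbit q (q powi e * (\<zeta> ^ l * r i0))) (phi \<zeta> t n a) = orbit_exponent n i0 l"
proof -
  have "fract_val (q_orbit q (\<zeta> ^ j * (q powi e * (\<zeta> ^ l * r i0)))) a = aik N s i0 ((l + j) mod t)"
    for j
  proof -
    have orbit: "q_orbit q (\<zeta> ^ j * (q powi e * (\<zeta> ^ l * r i0))) = q_orbit q (\<zeta> ^ (l + j) * r i0)"
      using q_orbit_mult_power_int[OF q_nonzero, of e "\<zeta> ^ (l + j) * r i0"]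
      by (simp add: power_add mult_ac)
    have indicator: "(if \<zeta> ^ k * r i \<in> q_orbit q (\<zeta> ^ (l + j) * r i0) then 1 else 0) =
        (if i = i0 \<and> k = (l + j) mod t then 1 else (0::int))" if "k < t" "i \<in> {1..R}" for k i
      using \<zeta>_power_mult_r_mem_q_orbit_iff[OF that(2) assms(2)] that(1) by simp
    have nonzero: "\<zeta> ^ (l + j) * r i0 \<noteq> 0" using \<zeta>_nonzero r_nonzero assms by simp
    have "fract_val (q_orbit q (\<zeta> ^ (l + j) * r i0)) a =
        (\<Sum>k<t. \<Sum>i\<in>{1..R}. aik N s i k * (if i = i0 \<and> k = (l + j) mod t then 1 else 0))"
      unfolding fract_val_a_q_orbit[OF nonzero] by (intro sum.cong refl) (simp add: indicator)
    also have "\<dots> = (\<Sum>k<t. if k = (l + j) mod t then aik N s i0 k else 0)"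
      using assms(2) by (intro sum.cong refl) (simp add: if_distrib sum.delta' cong: if_cong)
    also have "\<dots> = aik N s i0 ((l + j) mod t)"
      using t_pos by (simp add: sum.delta')
    finally show ?thesis unfolding orbit .
  qed
  then show ?thesis
    by (simp add: fract_val_phi_a_q_orbit orbit_exponent_def)
qed

lemma fract_val_phi_a_q_orbit_eq_0_iff:
  "(\<forall>\<gamma>. fract_val (q_orbit q \<gamma>) (phi \<zeta> t n a) = 0) \<longleftrightarrow>
    T * (\<Sum>j<t. n j) = 0 \<and> (\<forall>l<t. \<forall>i\<in>{1..R}. orbit_exponent n i l = 0)"
proof (intro iffI conjI allI impI ballI)
  assume zero: "\<forall>\<gamma>. fract_val (q_orbit q \<gamma>) (phi \<zeta> t n a) = 0"
  then show "T * (\<Sum>j<t. n j) = 0"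
    using fract_val_phi_a_q_orbit_0[of n] by simp
  show "orbit_exponent n i l = 0" if "l < t" "i \<in> {1..R}" for l i
    using zero fract_val_phi_a_q_orbit_r[OF that, of 0 n] by simp
next
  fix \<gamma>
  assume zero: "T * (\<Sum>j<t. n j) = 0 \<and> (\<forall>l<t. \<forall>i\<in>{1..R}. orbit_exponent n i l = 0)"
  show "fract_val (q_orbit q \<gamma>) (phi \<zeta> t n a) = 0"
  proof (cases "\<gamma> = 0")
    case True
    then show ?thesis using zero fract_val_phi_a_q_orbit_0 by simp
  next
    case False
    then show ?thesis
    proof (cases rule: q_orbit_cases)
      case 1
      have "\<zeta> ^ j * \<gamma> \<noteq> 0" for j using False \<zeta>_nonzero by simp
      with 1 show ?thesis
        by (simp add: fract_val_phi_a_q_orbit fract_val_a_q_orbit)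
    next
      case (2 l i0 e)
      then show ?thesis using zero fract_val_phi_a_q_orbit_r by simp
    qed
  qed
qed

definition n_hat :: "(nat \<Rightarrow> int) \<Rightarrow> nat \<Rightarrow> complex" where
  "n_hat n m = (\<Sum>j<t. of_int (n j) * inverse \<zeta> ^ (m * j))"

lemma n_hat_0: "n_hat n 0 = of_int (\<Sum>j<t. n j)"
  by (simp add: n_hat_def)

lemma n_hat_nonzero:
  assumes "\<exists>j<t. n j \<noteq> 0"
  shows "\<exists>m<t. n_hat n m \<noteq> 0"
proof (rule ccontr)
  assume "\<not> (\<exists>m<t. n_hat n m \<noteq> 0)"
  moreover have "(\<Sum>l<t. inverse \<zeta> ^ (m * l) * of_int (n l)) = n_hat n m" for m
    unfolding n_hat_def by (intro sum.cong refl) (rule mult.commute)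
  ultimately have "(of_int (n l) :: complex) = 0" if "l < t" for l
    using dft_eq_0_imp_eq_0[OF primitive_root_of_unity_inverse[OF \<zeta>], of "\<lambda>l. of_int (n l)"] that
    by simp
  with assms show False by auto
qed

lemma dft_orbit_exponent:
  "(\<Sum>l<t. \<zeta> ^ (m * l) * of_int (orbit_exponent n i l)) = n_hat n m * Dmat \<zeta> t N s m i"
proof -
  define c where "c u = (of_int (aik N s i u) :: complex)" for u
  have shifted: "(\<Sum>l<t. \<zeta> ^ (m * l) * c ((l + j) mod t)) = inverse \<zeta> ^ (m * j) * Dmat \<zeta> t N s m i"
    if "j < t" for j
  proof -
    have power_shift: "\<zeta> ^ (m * l) = inverse \<zeta> ^ (m * j) * \<zeta> ^ (m * ((l + j) mod t))" for l
    proof -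
      have "\<zeta> ^ (m * ((l + j) mod t)) = (\<zeta> ^ ((l + j) mod t)) ^ m"
        by (simp only: mult.commute[of m] power_mult)
      also have "\<dots> = \<zeta> ^ (m * l) * \<zeta> ^ (m * j)"
        by (simp only: primitive_root_of_unity_power_mod[OF \<zeta>, symmetric] power_add
            power_mult_distrib mult.commute[of m] power_mult)
      finally show ?thesis
        using \<zeta>_nonzero by (simp add: power_inverse)
    qed
    have "(\<Sum>l<t. \<zeta> ^ (m * l) * c ((l + j) mod t)) =
        inverse \<zeta> ^ (m * j) * (\<Sum>l<t. \<zeta> ^ (m * ((l + j) mod t)) * c ((l + j) mod t))"
      unfolding sum_distrib_left by (intro sum.cong refl) (subst power_shift, rule mult.assoc)
    also have "(\<Sum>l<t. \<zeta> ^ (m * ((l + j) mod t)) * c ((l + j) mod t)) = (\<Sum>u<t. \<zeta> ^ (m * u) * c u)"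
      using sum.reindex_bij_betw[OF bij_betw_add_mod[OF that], of "\<lambda>u. \<zeta> ^ (m * u) * c u"] by simp
    finally show ?thesis by (simp add: c_def Dmat_def)
  qed
  have "(\<Sum>l<t. \<zeta> ^ (m * l) * of_int (orbit_exponent n i l)) =
      (\<Sum>l<t. \<Sum>j<t. of_int (n j) * (\<zeta> ^ (m * l) * c ((l + j) mod t)))"
    unfolding orbit_exponent_def c_def of_int_sum of_int_mult sum_distrib_left
    by (intro sum.cong refl) (rule mult.left_commute)
  also have "\<dots> = (\<Sum>j<t. of_int (n j) * (\<Sum>l<t. \<zeta> ^ (m * l) * c ((l + j) mod t)))"
    by (subst sum.swap) (simp only: sum_distrib_left)
  also have "\<dots> = (\<Sum>j<t. of_int (n j) * (inverse \<zeta> ^ (m * j) * Dmat \<zeta> t N s m i))"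
    by (rule sum.cong[OF refl]) (simp add: shifted)
  also have "\<dots> = n_hat n m * Dmat \<zeta> t N s m i"
    by (simp only: n_hat_def sum_distrib_right mult.assoc)
  finally show ?thesis .
qed

lemma orbit_exponent_eq_0_iff:
  "(\<forall>l<t. orbit_exponent n i l = 0) \<longleftrightarrow> (\<forall>m<t. n_hat n m * Dmat \<zeta> t N s m i = 0)"
proof (intro iffI allI impI)
  fix m assume "\<forall>l<t. orbit_exponent n i l = 0"
  then have "(\<Sum>l<t. \<zeta> ^ (m * l) * of_int (orbit_exponent n i l)) = 0"
    by (intro sum.neutral) simp
  then show "n_hat n m * Dmat \<zeta> t N s m i = 0"
    by (simp only: dft_orbit_exponent)
next
  fix l assume "\<forall>m<t. n_hat n m * Dmat \<zeta> t N s m i = 0" and "l < t"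
  then have "(of_int (orbit_exponent n i l) :: complex) = 0"
    using dft_eq_0_imp_eq_0[OF \<zeta>, of "\<lambda>l. of_int (orbit_exponent n i l)"]
    by (simp only: dft_orbit_exponent)
  then show "orbit_exponent n i l = 0" by simp
qed

lemma inverse_\<zeta>_power_minus_mod:
  assumes "u < t"
  shows "inverse \<zeta> ^ (m * ((t - u) mod t)) = \<zeta> ^ (m * u)"
proof -
  have "\<zeta> ^ (u + (t - u) mod t) = 1"
    using assms \<zeta> by (cases "u = 0") (auto simp: primitive_root_of_unity_def)
  then have "\<zeta> ^ (m * u) * \<zeta> ^ (m * ((t - u) mod t)) = 1"
    by (simp only: mult.commute[of m] power_mult power_one flip: power_mult_distrib power_add)
  then show ?thesis
    using \<zeta>_nonzero by (simp add: power_inverse field_simps)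
qed

lemma n_hat_const_1: "0 < m \<Longrightarrow> m < t \<Longrightarrow> n_hat (\<lambda>_. 1) m = 0"
  unfolding n_hat_def
  using primitive_root_of_unity_power_power_eq_1[OF primitive_root_of_unity_inverse[OF \<zeta>], of m]
    primitive_root_of_unity_power_eq_1_iff[OF primitive_root_of_unity_inverse[OF \<zeta>], of m]
  by (simp add: power_mult sum_gp_strict)

lemma orbit_exponent_const_1_eq_0:
  assumes "\<forall>i\<in>{1..R}. Dmat \<zeta> t N s 0 i = 0" "i \<in> {1..R}" "l < t"
  shows "orbit_exponent (\<lambda>_. 1) i l = 0"
proof -
  have "n_hat (\<lambda>_. 1) m * Dmat \<zeta> t N s m i = 0" if "m < t" for m
    using assms(1,2) n_hat_const_1[OF _ that] by (cases "m = 0") auto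
  with orbit_exponent_eq_0_iff assms(3) show ?thesis by blast
qed

text \<open>Reading the coefficients of \<open>W\<close> backwards makes \<open>n_hat n m\<close> a multiple of
  \<open>W(\<zeta>\<^sup>m)\<close>, which vanishes wherever the row \<open>m\<close> of \<open>D\<close> might not.\<close>

lemma exponents_of_zero_row:
  assumes k: "0 < k" "k < t" and row: "\<forall>i\<in>{1..R}. Dmat \<zeta> t N s k i = 0"
  obtains n where "\<exists>j<t. n j \<noteq> 0" "(\<Sum>j<t. n j) = 0"
    "\<forall>l<t. \<forall>i\<in>{1..R}. orbit_exponent n i l = 0"
proof -
  have "(\<zeta> ^ k) ^ t = 1" "\<zeta> ^ k \<noteq> 1"
    using k primitive_root_of_unity_power_power_eq_1[OF \<zeta>]
      primitive_root_of_unity_power_eq_1_iff[OF \<zeta>] by auto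
  then obtain W where W: "W \<noteq> 0" "degree W < t" "poly (map_poly of_rat W) (1::complex) = 0"
    and conj: "\<And>(x::complex) B. x ^ t = 1 \<Longrightarrow> poly (map_poly of_rat W) x \<noteq> 0 \<Longrightarrow>
       poly (map_poly of_rat B) (\<zeta> ^ k) = 0 \<Longrightarrow> poly (map_poly of_rat B) x = 0"
    using rat_poly_nonzero_only_at_conjugates[OF t_pos] by blast
  obtain D g where D: "D > 0" and g: "\<And>u. u < t \<Longrightarrow> of_int (g u) = of_int D * coeff W u"
    using rat_common_denominator[of t "coeff W"] by auto
  define n where "n j = g ((t - j) mod t)" for j
  have n_hat: "n_hat n m = of_int D * poly (map_poly of_rat W) (\<zeta> ^ m)" for m
  proof -
    have "n_hat n m =
        (\<Sum>j<t. of_int (g ((t - j) mod t)) * inverse \<zeta> ^ (m * ((t - (t - j) mod t) mod t)))"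
      unfolding n_hat_def n_def by (intro sum.cong refl) (simp add: minus_mod_minus_mod)
    also have "\<dots> = (\<Sum>u<t. of_int (g u) * inverse \<zeta> ^ (m * ((t - u) mod t)))"
      by (rule sum.reindex_bij_betw[OF bij_betw_minus_mod])
    also have "\<dots> = (\<Sum>u<t. of_int D * (of_rat (coeff W u) * (\<zeta> ^ m) ^ u))"
    proof (rule sum.cong[OF refl])
      fix u assume u: "u \<in> {..<t}"
      have "(of_int (g u) :: complex) = of_rat (of_int (g u))"
        by simp
      also have "\<dots> = of_int D * of_rat (coeff W u)"
        using u by (simp add: g of_rat_mult)
      finally have "(of_int (g u) :: complex) = of_int D * of_rat (coeff W u)" .
      moreover have "inverse \<zeta> ^ (m * ((t - u) mod t)) = (\<zeta> ^ m) ^ u"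
        using u unfolding power_mult[symmetric] by (simp add: inverse_\<zeta>_power_minus_mod)
      ultimately show "of_int (g u) * inverse \<zeta> ^ (m * ((t - u) mod t)) =
          of_int D * (of_rat (coeff W u) * (\<zeta> ^ m) ^ u)"
        by (simp only: mult.assoc)
    qed
    also have "\<dots> = of_int D * poly (map_poly of_rat (\<Sum>u<t. monom (coeff W u) u)) (\<zeta> ^ m)"
      by (simp only: sum_distrib_left poly_map_of_rat_sum_monom)
    also have "\<dots> = of_int D * poly (map_poly of_rat W) (\<zeta> ^ m)"
      by (simp only: sum_monom_coeff[OF W(2)])
    finally show ?thesis .
  qed
  have "\<exists>j<t. n j \<noteq> 0"
  proof
    define u where "u = degree W"
    have "(of_int (g u) :: rat) = of_int D * coeff W u"
      using g W(2) unfolding u_def by blast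
    moreover have "coeff W u \<noteq> 0"
      using W(1) unfolding u_def by simp
    ultimately have "g u \<noteq> 0"
      using D by auto
    moreover have "n ((t - u) mod t) = g u"
      unfolding n_def u_def using W(2) by (simp only: minus_mod_minus_mod)
    ultimately show "(t - u) mod t < t \<and> n ((t - u) mod t) \<noteq> 0"
      using t_pos by simp
  qed
  moreover have "(\<Sum>j<t. n j) = 0"
  proof -
    have "(of_int (\<Sum>j<t. n j) :: complex) = n_hat n 0"
      by (simp only: n_hat_0)
    also have "\<dots> = 0"
      by (simp only: n_hat power_0 W(3) mult_zero_right)
    finally show ?thesis by (simp only: of_int_eq_0_iff)
  qed
  moreover have "orbit_exponent n i l = 0" if "l < t" "i \<in> {1..R}" for l i
  proof -
    define A where "A = (\<Sum>u<t. monom (of_int (aik N s i u) :: rat) u)"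
    have poly_A: "poly (map_poly of_rat A) (\<zeta> ^ m) = Dmat \<zeta> t N s m i" for m
      unfolding A_def Dmat_def by (rule poly_map_of_rat_sum_monom_of_int_power)
    have "n_hat n m * Dmat \<zeta> t N s m i = 0" if "m < t" for m
    proof (cases "poly (map_poly of_rat W) (\<zeta> ^ m) = 0")
      case False
      then have "poly (map_poly of_rat A) (\<zeta> ^ m) = 0"
        using conj[of "\<zeta> ^ m" A] row \<open>i \<in> {1..R}\<close> poly_A
          primitive_root_of_unity_power_power_eq_1[OF \<zeta>] by simp
      then show ?thesis by (simp add: poly_A)
    qed (simp add: n_hat)
    with orbit_exponent_eq_0_iff that(1) show ?thesis by blast
  qed
  ultimately show ?thesis using that by blast
qed

lemma has_solution_iff:
  "has_solution q \<zeta> t a \<longleftrightarrow> (\<exists>n. (\<exists>j<t. n j \<noteq> 0) \<and> T * (\<Sum>j<t. n j) = 0 \<and>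
     (\<forall>l<t. \<forall>i\<in>{1..R}. orbit_exponent n i l = 0) \<and> (\<exists>e. fract_lead_coeff (phi \<zeta> t n a) = q powi e))"
proof -
  have "has_solution q \<zeta> t a \<longleftrightarrow> (\<exists>n. (\<exists>j<t. n j \<noteq> 0) \<and> q_quotient q (phi \<zeta> t n a))"
    unfolding has_solution_def q_quotient_def by blast
  also have "\<dots> \<longleftrightarrow> (\<exists>n. (\<exists>j<t. n j \<noteq> 0) \<and> T * (\<Sum>j<t. n j) = 0 \<and>
     (\<forall>l<t. \<forall>i\<in>{1..R}. orbit_exponent n i l = 0) \<and> (\<exists>e. fract_lead_coeff (phi \<zeta> t n a) = q powi e))"
    by (simp add: q_quotient_iff[OF q_nonzero phi_nonzero[OF \<zeta>_nonzero a_nonzero]]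
        fract_val_phi_a_q_orbit_eq_0_iff conj_assoc)
  finally show ?thesis .
qed

text \<open>The factor coming from \<open>\<zeta>\<close> in the leading coefficient of \<open>\<phi>(a)\<close> disappears in the
  \<open>t\<close>-th power.\<close>

lemma fract_lead_coeff_phi_a_power_t:
  "fract_lead_coeff (phi \<zeta> t n a) powi int t = lam powi (int t * (\<Sum>j<t. n j))"
proof -
  define d where "d = fract_degree a"
  have factor: "(((\<zeta> ^ j) powi d * lam) powi n j) powi int t = lam powi (int t * n j)" for j
  proof -
    have "((\<zeta> ^ j) powi d) powi (n j * int t) = (\<zeta> ^ j) powi (int t * (d * n j))"
      by (simp only: power_int_mult[symmetric] mult.commute mult.left_commute)
    also have "\<dots> = ((\<zeta> ^ j) ^ t) powi (d * n j)"
      by (simp only: power_int_mult power_int_of_nat)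
    also have "\<dots> = 1"
      using \<zeta> unfolding primitive_root_of_unity_def
      by (simp flip: power_mult add: mult.commute[of j] power_mult)
    finally have \<zeta>_part: "((\<zeta> ^ j) powi d) powi (n j * int t) = 1" .
    have "(((\<zeta> ^ j) powi d * lam) powi n j) powi int t = ((\<zeta> ^ j) powi d * lam) powi (n j * int t)"
      by (rule power_int_mult[symmetric])
    also have "\<dots> = ((\<zeta> ^ j) powi d) powi (n j * int t) * lam powi (n j * int t)"
      by (rule power_int_mult_distrib)
    also have "\<dots> = lam powi (int t * n j)"
      by (simp only: \<zeta>_part mult_1_left) (simp only: mult.commute)
    finally show ?thesis .
  qed
  have "fract_lead_coeff (phi \<zeta> t n a) powi int t =
      (\<Prod>j<t. ((\<zeta> ^ j) powi d * lam) powi n j) powi int t"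
    by (simp only: fract_lead_coeff_phi[OF \<zeta>_nonzero a_nonzero] fract_lead_coeff_a d_def)
  also have "\<dots> = (\<Prod>j<t. lam powi (int t * n j))"
    by (simp only: prod_power_int_distrib factor)
  also have "\<dots> = lam powi (int t * (\<Sum>j<t. n j))"
    by (simp add: prod_power_int_sum[OF lam_nonzero] sum_distrib_left)
  finally show ?thesis .
qed

lemma has_solution_if_exponents:
  assumes n: "\<exists>j<t. n j \<noteq> 0" and T: "T * (\<Sum>j<t. n j) = 0"
    and orbit: "\<forall>l<t. \<forall>i\<in>{1..R}. orbit_exponent n i l = 0"
    and M: "M \<noteq> 0" and lead: "fract_lead_coeff (phi \<zeta> t n a) powi M = q powi e"
  shows "has_solution q \<zeta> t a"
proof -
  define n' where "n' j = M * n j" for j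
  have "\<exists>j<t. n' j \<noteq> 0" using n M by (auto simp: n'_def)
  moreover have "(\<Sum>j<t. n' j) = M * (\<Sum>j<t. n j)"
    by (simp add: n'_def sum_distrib_left)
  with T have "T * (\<Sum>j<t. n' j) = 0"
    by auto
  moreover have "orbit_exponent n' i l = M * orbit_exponent n i l" for i l
    by (simp add: orbit_exponent_def n'_def sum_distrib_left mult.assoc)
  moreover have "fract_lead_coeff (phi \<zeta> t n' a) = q powi e"
    unfolding n'_def phi_scale_exponents
    by (simp add: fract_lead_coeff_power_int phi_nonzero \<zeta>_nonzero a_nonzero lead)
  ultimately show ?thesis
    unfolding has_solution_iff using orbit by auto
qed

lemma zero_row_if_has_solution:
  assumes "has_solution q \<zeta> t a"
  obtains n m e where "m < t" "n_hat n m \<noteq> 0" "\<forall>i\<in>{1..R}. Dmat \<zeta> t N s m i = 0"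
    "T * (\<Sum>j<t. n j) = 0" "lam powi (int t * (\<Sum>j<t. n j)) = q powi e"
proof -
  obtain n e where n: "\<exists>j<t. n j \<noteq> 0" "T * (\<Sum>j<t. n j) = 0"
    "\<forall>l<t. \<forall>i\<in>{1..R}. orbit_exponent n i l = 0" "fract_lead_coeff (phi \<zeta> t n a) = q powi e"
    using assms unfolding has_solution_iff by blast
  obtain m where m: "m < t" "n_hat n m \<noteq> 0" using n_hat_nonzero[OF n(1)] by blast
  have "\<forall>i\<in>{1..R}. Dmat \<zeta> t N s m i = 0"
  proof
    fix i assume "i \<in> {1..R}"
    then have "n_hat n m * Dmat \<zeta> t N s m i = 0"
      using n(3) orbit_exponent_eq_0_iff[of n i] m(1) by blast
    with m(2) show "Dmat \<zeta> t N s m i = 0" by simp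
  qed
  moreover have "lam powi (int t * (\<Sum>j<t. n j)) = q powi (e * int t)"
    using fract_lead_coeff_phi_a_power_t[of n] by (simp add: n(4) power_int_mult)
  ultimately show ?thesis using that m n(2) by blast
qed

lemma has_solution_if_nonfirst_zero_row:
  assumes "0 < k" "k < t" "\<forall>i\<in>{1..R}. Dmat \<zeta> t N s k i = 0"
  shows "has_solution q \<zeta> t a"
proof -
  obtain n where n: "\<exists>j<t. n j \<noteq> 0" "(\<Sum>j<t. n j) = 0"
    "\<forall>l<t. \<forall>i\<in>{1..R}. orbit_exponent n i l = 0"
    using exponents_of_zero_row[OF assms] .
  have "fract_lead_coeff (phi \<zeta> t n a) powi int t = q powi 0"
    using fract_lead_coeff_phi_a_power_t[of n] n(2) by simp
  then show ?thesis
    using n t_pos by (intro has_solution_if_exponents[of n "int t" 0]) simp_all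
qed

lemma has_solution_if_first_zero_row:
  assumes "T = 0" "nontriv_meet lam q \<or> root_of_unity lam"
    and "\<forall>i\<in>{1..R}. Dmat \<zeta> t N s 0 i = 0"
  shows "has_solution q \<zeta> t a"
proof -
  obtain m e where "m \<noteq> 0" "lam powi m = q powi e"
    using power_int_eq_q_power_int_if_meet[OF assms(2)] .
  define L where "L = fract_lead_coeff (phi \<zeta> t (\<lambda>_. 1) a)"
  have "L powi (int t * m) = (L powi int t) powi m"
    by (rule power_int_mult)
  also have "\<dots> = (lam powi (int t * int t)) powi m"
    using fract_lead_coeff_phi_a_power_t[of "\<lambda>_. 1"] by (simp add: L_def)
  also have "\<dots> = (lam powi m) powi (int t * int t)"
    by (simp only: power_int_mult[symmetric] mult.commute)
  also have "\<dots> = q powi (e * (int t * int t))"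
    by (simp only: \<open>lam powi m = q powi e\<close> power_int_mult)
  finally have "L powi (int t * m) = q powi (e * (int t * int t))" .
  moreover have "int t * m \<noteq> 0" using \<open>m \<noteq> 0\<close> t_pos by simp
  ultimately show ?thesis
    using has_solution_if_exponents[of "\<lambda>_. 1" "int t * m"] orbit_exponent_const_1_eq_0[OF assms(3)]
      t_pos assms(1) unfolding L_def by auto
qed

lemma nonfirst_zero_row_if_has_solution:
  assumes "T \<noteq> 0 \<or> (\<not> nontriv_meet lam q \<and> \<not> root_of_unity lam)" "has_solution q \<zeta> t a"
  shows "\<exists>k. 0 < k \<and> k < t \<and> (\<forall>i\<in>{1..R}. Dmat \<zeta> t N s k i = 0)"
proof -
  obtain n m e where m: "m < t" "n_hat n m \<noteq> 0" "\<forall>i\<in>{1..R}. Dmat \<zeta> t N s m i = 0"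
    and T: "T * (\<Sum>j<t. n j) = 0" and lam: "lam powi (int t * (\<Sum>j<t. n j)) = q powi e"
    using zero_row_if_has_solution[OF assms(2)] .
  have "(\<Sum>j<t. n j) = 0"
    using assms(1) T power_int_eq_q_power_int_imp_eq_0[OF _ _ lam] t_pos by auto
  then have "m \<noteq> 0"
    using m(2) n_hat_0[of n] by (cases m) auto
  with m show ?thesis by blast
qed

end

theorem theorem7:
  fixes q \<zeta> lam :: complex and t R :: nat and T N :: int
    and r :: "nat \<Rightarrow> complex" and s :: "nat \<Rightarrow> int \<Rightarrow> nat \<Rightarrow> int"
  assumes "norm q > 1"
    and "t \<ge> 2"
    and "primitive_root_of_unity t \<zeta>"
    and "lam \<noteq> 0"
    and "\<forall>i\<in>{1..R}. r i \<noteq> 0"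
    and "\<forall>i\<in>{1..R}. \<forall>j\<in>{1..R}. i \<noteq> j \<longrightarrow>
           \<not> (\<exists>m n :: int. r i = \<zeta> powi m * q powi n * r j)"
  shows "(T = 0 \<and> (nontriv_meet lam q \<or> root_of_unity lam) \<longrightarrow>
           (has_solution q \<zeta> t (a_rf q \<zeta> t lam T N R r s) \<longleftrightarrow>
              (\<exists>k<t. \<forall>i\<in>{1..R}. Dmat \<zeta> t N s k i = 0)))
       \<and> (T \<noteq> 0 \<or> (\<not> nontriv_meet lam q \<and> \<not> root_of_unity lam) \<longrightarrow>
           (has_solution q \<zeta> t (a_rf q \<zeta> t lam T N R r s) \<longleftrightarrow>
              (\<exists>k. 0 < k \<and> k < t \<and> (\<forall>i\<in>{1..R}. Dmat \<zeta> t N s k i = 0))))"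
proof -
  interpret a_factorization q \<zeta> lam t R T N r s
    using assms by unfold_locales
  show ?thesis
  proof (intro conjI impI iffI)
    assume "has_solution q \<zeta> t a"
    then show "\<exists>k<t. \<forall>i\<in>{1..R}. Dmat \<zeta> t N s k i = 0"
      by (rule zero_row_if_has_solution) blast
  next
    assume "T = 0 \<and> (nontriv_meet lam q \<or> root_of_unity lam)"
      and "\<exists>k<t. \<forall>i\<in>{1..R}. Dmat \<zeta> t N s k i = 0"
    then show "has_solution q \<zeta> t a"
      using has_solution_if_first_zero_row has_solution_if_nonfirst_zero_row by (metis neq0_conv)
  next
    assume "T \<noteq> 0 \<or> (\<not> nontriv_meet lam q \<and> \<not> root_of_unity lam)" "has_solution q \<zeta> t a"
    then show "\<exists>k. 0 < k \<and> k < t \<and> (\<forall>i\<in>{1..R}. Dmat \<zeta> t N s k i = 0)"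
      by (rule nonfirst_zero_row_if_has_solution)
  next
    assume "\<exists>k. 0 < k \<and> k < t \<and> (\<forall>i\<in>{1..R}. Dmat \<zeta> t N s k i = 0)"
    then show "has_solution q \<zeta> t a"
      using has_solution_if_nonfirst_zero_row by blast
  qed
qed

end
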